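(* Let $(\Omega,\Sigma,\mathbb{P})$ be a probability space and let $X$ be an ideal of $L_0(\Sigma)$ which contains the constant functions and admits a strictly positive order continuous linear functional. Let $f\in X$ with $f\ge 0$, and let $O_f=\operatorname{span}\{\mathbb 1,(f-k)^+:k\in\mathbb{R}\}$. For $g\in X$, the following are equivalent: (a) $g\in L_0(\sigma(f))\cap X$; (b) $g$ belongs to the closure of $O_f$ in the $\sigma(X,X_n^\sim)$-topology; (c) there exists a sequence $(g_n)$ in $O_f$ such that $g_n\to g$ almost everywhere.
   Context: $L_0(\Sigma)$ is the vector lattice of real-valued measurable functions modulo a.e. equality with the a.e. order; an ideal is a subspace $X$ with $|x|\le|y|$, $y\in X$ implying $x\in X$. $\mathbb 1$ is the constant one function. A net $x_\alpha$ converges in order to $x$ in $X$ if there is a net $z_\beta\downarrow 0$ in $X$ such that for every $\beta$ there is $\alpha_0$ with $|x_\alpha-x|\le z_\beta$ for $\alpha\ge\alpha_0$. A linear functional $\phi$ on $X$ is order continuous if $\phi(x_\alpha)\to 0$ whenever $x_\alpha\to 0$ in order in $X$; it is strictly positive if $\phi(x)>0$ whenever $x\ge0$, $x\neq 0$. $X_n^\sim$ denotes the space of all order continuous linear functionals on $X$, and $\sigma(X,X_n^\sim)$ is the weak topology on $X$ induced by $X_n^\sim$. $\sigma(f)$ is the smallest sub-$\sigma$-algebra of $\Sigma$ making $f$ measurable and containing all $\mathbb{P}$-null sets; $L_0(\sigma(f))$ is the set of functions in $L_0(\Sigma)$ measurable with respect to $\sigma(f)$. *)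

theory Defs
  imports "HOL-Probability.Probability"
begin

text \<open>Elements of L_0 are represented by measurable functions; an ideal X of L_0 is
represented by the set of all representatives of its elements (so X is saturated
under a.e. equality).  The order is the a.e. order.\<close>

definition L0_ideal :: "'a measure \<Rightarrow> ('a \<Rightarrow> real) set \<Rightarrow> bool" where
  "L0_ideal M X \<longleftrightarrow>
     X \<subseteq> borel_measurable M \<and>
     (\<lambda>_. 0) \<in> X \<and>
     (\<forall>x\<in>X. \<forall>y\<in>X. (\<lambda>\<omega>. x \<omega> + y \<omega>) \<in> X) \<and>
     (\<forall>c::real. \<forall>x\<in>X. (\<lambda>\<omega>. c * x \<omega>) \<in> X) \<and>
     (\<forall>x y. x \<in> borel_measurable M \<longrightarrow> y \<in> X \<longrightarrow>
        (AE \<omega> in M. \<bar>x \<omega>\<bar> \<le> \<bar>y \<omega>\<bar>) \<longrightarrow> x \<in> X)"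

text \<open>A net z decreasing to 0 in X, represented by its range Z: a nonempty
downward directed subset of X whose infimum in X (a.e. order) is 0.\<close>

definition decr_to_zero :: "'a measure \<Rightarrow> ('a \<Rightarrow> real) set \<Rightarrow> ('a \<Rightarrow> real) set \<Rightarrow> bool" where
  "decr_to_zero M X Z \<longleftrightarrow>
     Z \<subseteq> X \<and> Z \<noteq> {} \<and>
     (\<forall>z1\<in>Z. \<forall>z2\<in>Z. \<exists>z3\<in>Z. (AE \<omega> in M. z3 \<omega> \<le> z1 \<omega>) \<and> (AE \<omega> in M. z3 \<omega> \<le> z2 \<omega>)) \<and>
     (\<forall>z\<in>Z. AE \<omega> in M. 0 \<le> z \<omega>) \<and>
     (\<forall>w\<in>X. (\<forall>z\<in>Z. AE \<omega> in M. w \<omega> \<le> z \<omega>) \<longrightarrow> (AE \<omega> in M. w \<omega> \<le> 0))"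

text \<open>Order convergence in X of a net, the net being represented by its
(pushed-forward) eventually-filter F on functions.\<close>

definition order_conv :: "'a measure \<Rightarrow> ('a \<Rightarrow> real) set \<Rightarrow> ('a \<Rightarrow> real) filter \<Rightarrow> ('a \<Rightarrow> real) \<Rightarrow> bool" where
  "order_conv M X F x0 \<longleftrightarrow> x0 \<in> X \<and>
     (\<exists>Z. decr_to_zero M X Z \<and>
        (\<forall>z\<in>Z. eventually (\<lambda>x. AE \<omega> in M. \<bar>x \<omega> - x0 \<omega>\<bar> \<le> z \<omega>) F))"

definition lin_functional :: "'a measure \<Rightarrow> ('a \<Rightarrow> real) set \<Rightarrow> (('a \<Rightarrow> real) \<Rightarrow> real) \<Rightarrow> bool" where
  "lin_functional M X \<phi> \<longleftrightarrow>
     (\<forall>x\<in>X. \<forall>y\<in>X. (AE \<omega> in M. x \<omega> = y \<omega>) \<longrightarrow> \<phi> x = \<phi> y) \<and>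
     (\<forall>x\<in>X. \<forall>y\<in>X. \<phi> (\<lambda>\<omega>. x \<omega> + y \<omega>) = \<phi> x + \<phi> y) \<and>
     (\<forall>c::real. \<forall>x\<in>X. \<phi> (\<lambda>\<omega>. c * x \<omega>) = c * \<phi> x)"

definition order_continuous :: "'a measure \<Rightarrow> ('a \<Rightarrow> real) set \<Rightarrow> (('a \<Rightarrow> real) \<Rightarrow> real) \<Rightarrow> bool" where
  "order_continuous M X \<phi> \<longleftrightarrow>
     (\<forall>F. eventually (\<lambda>x. x \<in> X) F \<longrightarrow> order_conv M X F (\<lambda>_. 0) \<longrightarrow> (\<phi> \<longlongrightarrow> 0) F)"

definition strictly_positive :: "'a measure \<Rightarrow> ('a \<Rightarrow> real) set \<Rightarrow> (('a \<Rightarrow> real) \<Rightarrow> real) \<Rightarrow> bool" where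
  "strictly_positive M X \<phi> \<longleftrightarrow>
     (\<forall>x\<in>X. (AE \<omega> in M. 0 \<le> x \<omega>) \<longrightarrow> \<not> (AE \<omega> in M. x \<omega> = 0) \<longrightarrow> \<phi> x > 0)"

definition order_dual_n :: "'a measure \<Rightarrow> ('a \<Rightarrow> real) set \<Rightarrow> (('a \<Rightarrow> real) \<Rightarrow> real) set" where
  "order_dual_n M X = {\<phi>. lin_functional M X \<phi> \<and> order_continuous M X \<phi>}"

definition weak_top :: "'a measure \<Rightarrow> ('a \<Rightarrow> real) set \<Rightarrow> ('a \<Rightarrow> real) topology" where
  "weak_top M X = topology_generated_by
     (insert X {{x \<in> X. \<phi> x \<in> U} | \<phi> U. \<phi> \<in> order_dual_n M X \<and> open U})"

definition sigma_of :: "'a measure \<Rightarrow> ('a \<Rightarrow> real) \<Rightarrow> 'a measure" where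
  "sigma_of M f = sigma (space M) ({f -` B \<inter> space M | B. B \<in> sets borel} \<union> null_sets M)"

definition O_span :: "('a \<Rightarrow> real) \<Rightarrow> ('a \<Rightarrow> real) set" where
  "O_span f = {(\<lambda>\<omega>. c + (\<Sum>k\<in>K. a k * max (f \<omega> - k) 0)) | c a K. finite K}"

end

theory Submission
  imports Defs
begin

text \<open>
  The weak closure of \<open>O\<^sub>f\<close> and its closure in probability are linear subspaces of \<open>X\<close> that
  contain \<open>O\<^sub>f\<close> and are closed under a.e. limits of sequences dominated in \<open>X\<close>; for the weak
  closure this holds because an order continuous functional is continuous along such sequences.
  The ramps \<open>1 - (n + 1) ((f - a)\<^sup>+ - (f - a - 1/(n + 1))\<^sup>+)\<close> in \<open>O\<^sub>f\<close> converge to the indicator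
  of \<open>{f \<le> a}\<close>, so a Dynkin argument puts the indicators of all \<open>\<sigma>(f)\<close>-sets, and then all
  \<open>\<sigma>(f)\<close>-measurable elements of \<open>X\<close>, into both closures. Fast convergence in probability
  yields a.e. convergence (Borel-Cantelli), and \<open>\<sigma>(f)\<close> is closed under a.e. limits because it
  contains the null sets.

  Conversely, the strictly positive order continuous functional \<open>\<phi>\<close> is integration against a
  finite measure \<open>\<nu>\<close> with the same null sets as \<open>P\<close>. If \<open>g\<close> is not \<open>\<sigma>(f)\<close>-measurable and
  \<open>h = E\<^sub>\<nu>[g | \<sigma>(f)]\<close>, then \<open>x \<mapsto> \<integral> (x - E\<^sub>\<nu>[x | \<sigma>(f)]) sgn (g - h) d\<nu>\<close> is an order
  continuous functional that vanishes on all \<open>\<sigma>(f)\<close>-measurable elements of \<open>X\<close>, hence on the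
  weak closure of \<open>O\<^sub>f\<close>, but takes the value \<open>\<integral> |g - h| d\<nu> > 0\<close> at \<open>g\<close>.
\<close>

lemma AE_abs_le_of_LIMSEQ:
  fixes gs :: "nat \<Rightarrow> 'a \<Rightarrow> real"
  assumes "AE \<omega> in M. (\<lambda>n. gs n \<omega>) \<longlonglongrightarrow> g \<omega>" and "\<And>n. AE \<omega> in M. \<bar>gs n \<omega>\<bar> \<le> \<bar>u \<omega>\<bar>"
  shows "AE \<omega> in M. \<bar>g \<omega>\<bar> \<le> \<bar>u \<omega>\<bar>"
proof -
  have "AE \<omega> in M. \<forall>n. \<bar>gs n \<omega>\<bar> \<le> \<bar>u \<omega>\<bar>" using assms(2) by (simp add: AE_all_countable)
  with assms(1) show ?thesis
  proof eventually_elim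
    case (elim \<omega>)
    from tendsto_rabs[OF elim(1)] show ?case by (rule LIMSEQ_le_const2) (use elim(2) in auto)
  qed
qed

lemma LIMSEQ_tail_SUP:
  fixes a :: "nat \<Rightarrow> real"
  assumes bdd: "bdd_above (range a)" and lim: "a \<longlonglongrightarrow> 0"
  shows "(\<lambda>n. SUP m\<in>{n..}. a m) \<longlonglongrightarrow> 0"
proof (rule order_tendstoI)
  have bdd': "bdd_above (a ` {n..})" for n using bdd by (rule bdd_above_mono) auto
  fix e :: real
  assume "e < 0"
  with lim have "eventually (\<lambda>n. e < a n) sequentially" by (rule order_tendstoD)
  then show "eventually (\<lambda>n. e < (SUP m\<in>{n..}. a m)) sequentially"
    by eventually_elim (rule less_le_trans, assumption, rule cSUP_upper[OF _ bdd'], simp)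
next
  have bdd': "bdd_above (a ` {n..})" for n using bdd by (rule bdd_above_mono) auto
  fix e :: real
  assume "0 < e"
  with lim have "eventually (\<lambda>n. a n < e / 2) sequentially" by (intro order_tendstoD) auto
  then obtain N where N: "\<And>m. N \<le> m \<Longrightarrow> a m < e / 2" unfolding eventually_sequentially by blast
  have "(SUP m\<in>{n..}. a m) \<le> e / 2" if "N \<le> n" for n
    by (rule cSUP_least) (use N that in \<open>auto intro: less_imp_le\<close>)
  then show "eventually (\<lambda>n. (SUP m\<in>{n..}. a m) < e) sequentially"
    unfolding eventually_sequentially using \<open>0 < e\<close> by (intro exI[of _ N]) force
qed

lemma LIMSEQ_min_of_nat: "(\<lambda>n. min (real n) t) \<longlonglongrightarrow> t"
proof -
  obtain N where "t \<le> real N" using real_arch_simple by blast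
  then have "eventually (\<lambda>n. min (real n) t = t) sequentially"
    unfolding eventually_sequentially by (intro exI[of _ N]) auto
  then show ?thesis by (rule tendsto_eventually)
qed

lemma LIMSEQ_clip_of_nat: "(\<lambda>n. max (- real n) (min (real n) t)) \<longlonglongrightarrow> t"
proof -
  obtain N where "\<bar>t\<bar> \<le> real N" using real_arch_simple by blast
  then have "eventually (\<lambda>n. max (- real n) (min (real n) t) = t) sequentially"
    unfolding eventually_sequentially by (intro exI[of _ N]) auto
  then show ?thesis by (rule tendsto_eventually)
qed

lemma sum_indicator_disjoint_family:
  fixes A :: "nat \<Rightarrow> 'a set"
  assumes "disjoint_family A"
  shows "(\<Sum>i<n. indicator (A i) \<omega>) = (indicator (\<Union>i<n. A i) \<omega> :: real)"
proof -
  have "disjoint_family_on A {..<n}" using assms disjoint_family_on_mono by blast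
  from indicator_UN_disjoint[OF finite_lessThan this, of \<omega>]
  have "(indicator (\<Union>i<n. A i) \<omega> :: real) = (\<Sum>i<n. indicator (A i) \<omega>)" by simp
  then show ?thesis by simp
qed

lemma simple_function_eq_sum_indicator:
  fixes s :: "'a \<Rightarrow> real"
  assumes "simple_function N s" "\<omega> \<in> space N"
  shows "s \<omega> = (\<Sum>y\<in>s ` space N. y * indicator (s -` {y} \<inter> space N) \<omega>)"
proof -
  have "s \<omega> = (\<Sum>y\<in>s ` space N. indicator (s -` {y} \<inter> space N) \<omega> *\<^sub>R y)"
    by (rule simple_function_indicator_representation_banach[OF assms])
  also have "\<dots> = (\<Sum>y\<in>s ` space N. y * indicator (s -` {y} \<inter> space N) \<omega>)"
    by (rule sum.cong) simp_all
  finally show ?thesis .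
qed

lemma (in finite_measure) measure_deviation_tendsto_0_of_AE_LIMSEQ:
  fixes gs :: "nat \<Rightarrow> 'a \<Rightarrow> real"
  assumes [measurable]: "\<And>n. gs n \<in> borel_measurable M" "g \<in> borel_measurable M"
    and conv: "AE \<omega> in M. (\<lambda>n. gs n \<omega>) \<longlonglongrightarrow> g \<omega>" and "0 < e"
  shows "(\<lambda>n. measure M {\<omega> \<in> space M. e < \<bar>gs n \<omega> - g \<omega>\<bar>}) \<longlonglongrightarrow> 0"
proof -
  define A where "A n = {\<omega> \<in> space M. e < \<bar>gs n \<omega> - g \<omega>\<bar>}" for n
  have A [measurable]: "A n \<in> sets M" for n unfolding A_def by measurable
  have "(\<lambda>n. integral\<^sup>L M (indicator (A n) :: 'a \<Rightarrow> real)) \<longlonglongrightarrow> integral\<^sup>L M (\<lambda>_. 0 :: real)"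
  proof (rule integral_dominated_convergence[where w = "\<lambda>_. 1"])
    show "AE \<omega> in M. norm (indicator (A n) \<omega> :: real) \<le> 1" for n
      by (rule AE_I2) (simp add: indicator_def)
    show "AE \<omega> in M. (\<lambda>n. indicator (A n) \<omega> :: real) \<longlonglongrightarrow> 0" using conv
    proof eventually_elim
      case (elim \<omega>)
      then have "eventually (\<lambda>n. \<bar>gs n \<omega> - g \<omega>\<bar> < e) sequentially"
        using \<open>0 < e\<close> by (simp add: tendsto_iff dist_real_def)
      then have "eventually (\<lambda>n. (indicator (A n) \<omega> :: real) = 0) sequentially"
        by eventually_elim (auto simp: A_def)
      then show ?case by (rule tendsto_eventually)
    qed
  qed auto
  then show ?thesis by (simp add: A_def[symmetric])
qed

lemma (in finite_measure) measure_deviation_triangle: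
  fixes a b c :: "'a \<Rightarrow> real"
  assumes [measurable]: "a \<in> borel_measurable M" "b \<in> borel_measurable M" "c \<in> borel_measurable M"
  shows "measure M {\<omega> \<in> space M. e < \<bar>a \<omega> - c \<omega>\<bar>}
     \<le> measure M {\<omega> \<in> space M. e/2 < \<bar>a \<omega> - b \<omega>\<bar>} + measure M {\<omega> \<in> space M. e/2 < \<bar>b \<omega> - c \<omega>\<bar>}"
proof -
  have "measure M {\<omega> \<in> space M. e < \<bar>a \<omega> - c \<omega>\<bar>}
     \<le> measure M ({\<omega> \<in> space M. e/2 < \<bar>a \<omega> - b \<omega>\<bar>} \<union> {\<omega> \<in> space M. e/2 < \<bar>b \<omega> - c \<omega>\<bar>})"
  proof (rule finite_measure_mono)
    show "{\<omega> \<in> space M. e < \<bar>a \<omega> - c \<omega>\<bar>}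
      \<subseteq> {\<omega> \<in> space M. e/2 < \<bar>a \<omega> - b \<omega>\<bar>} \<union> {\<omega> \<in> space M. e/2 < \<bar>b \<omega> - c \<omega>\<bar>}"
    proof safe
      fix \<omega> assume "e < \<bar>a \<omega> - c \<omega>\<bar>" "\<not> e/2 < \<bar>b \<omega> - c \<omega>\<bar>"
      moreover have "\<bar>a \<omega> - c \<omega>\<bar> \<le> \<bar>a \<omega> - b \<omega>\<bar> + \<bar>b \<omega> - c \<omega>\<bar>" by linarith
      ultimately show "e/2 < \<bar>a \<omega> - b \<omega>\<bar>" by linarith
    qed
  qed auto
  also have "\<dots> \<le> measure M {\<omega> \<in> space M. e/2 < \<bar>a \<omega> - b \<omega>\<bar>} + measure M {\<omega> \<in> space M. e/2 < \<bar>b \<omega> - c \<omega>\<bar>}"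
    by (rule measure_Un_le) auto
  finally show ?thesis .
qed

lemma (in finite_measure) AE_LIMSEQ_of_geometric_measure_deviation:
  fixes gs :: "nat \<Rightarrow> 'a \<Rightarrow> real"
  assumes [measurable]: "\<And>n. gs n \<in> borel_measurable M" "g \<in> borel_measurable M"
    and dev: "\<And>n. measure M {\<omega> \<in> space M. (1/2)^n < \<bar>g \<omega> - gs n \<omega>\<bar>} < (1/2)^n"
  shows "AE \<omega> in M. (\<lambda>n. gs n \<omega>) \<longlonglongrightarrow> g \<omega>"
proof -
  define A where "A n = {\<omega> \<in> space M. (1/2)^n < \<bar>g \<omega> - gs n \<omega>\<bar>}" for n
  have "summable (\<lambda>n. measure M (A n))"
    by (rule summable_comparison_test[OF _ summable_geometric[of "1/2::real"]])
       (use dev in \<open>auto simp: A_def intro!: less_imp_le\<close>)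
  then have "AE \<omega> in M. eventually (\<lambda>n. \<omega> \<in> space M - A n) sequentially"
    by (intro borel_cantelli_AE1) (auto simp: A_def less_top[symmetric])
  then show ?thesis
  proof eventually_elim
    case (elim \<omega>)
    have "eventually (\<lambda>n. norm (gs n \<omega> - g \<omega>) \<le> (1/2)^n) sequentially"
      using elim by eventually_elim (auto simp: A_def abs_minus_commute)
    then have "(\<lambda>n. gs n \<omega> - g \<omega>) \<longlonglongrightarrow> 0"
      by (rule Lim_null_comparison) (simp add: LIMSEQ_realpow_zero)
    then show ?case by (simp add: LIM_zero_cancel)
  qed
qed

section \<open>Conditional expectation\<close>

lemma integrable_mult_AE_bounded:
  fixes g w :: "'a \<Rightarrow> real"
  assumes g: "integrable M g" and [measurable]: "w \<in> borel_measurable M" and w: "AE x in M. \<bar>w x\<bar> \<le> C"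
  shows "integrable M (\<lambda>x. g x * w x)"
proof (rule Bochner_Integration.integrable_bound[OF integrable_mult_right[OF g, of C]])
  show "(\<lambda>x. g x * w x) \<in> borel_measurable M" using borel_measurable_integrable[OF g] by measurable
  show "AE x in M. norm (g x * w x) \<le> norm (C * g x)" using w
  proof eventually_elim
    case (elim x)
    have "\<bar>g x * w x\<bar> \<le> \<bar>g x\<bar> * C" unfolding abs_mult using elim by (rule mult_left_mono) simp
    also have "\<dots> \<le> \<bar>C * g x\<bar>" by (simp add: abs_mult mult.commute mult_right_mono)
    finally show ?case by simp
  qed
qed

lemma (in finite_measure_subalgebra) AE_abs_real_cond_exp_le:
  fixes u :: "'a \<Rightarrow> real"
  assumes [measurable]: "u \<in> borel_measurable M" and u: "AE x in M. \<bar>u x\<bar> \<le> C"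
  shows "AE x in M. \<bar>real_cond_exp M F u x\<bar> \<le> C"
proof -
  have ui: "integrable M u" by (rule integrable_const_bound[where B = C]) (use u in simp_all)
  have "AE x in M. real_cond_exp M F u x \<le> C"
    by (rule real_cond_exp_le_c[OF ui]) (use u in \<open>auto elim: eventually_mono\<close>)
  moreover have "AE x in M. - C \<le> real_cond_exp M F u x"
    by (rule real_cond_exp_ge_c[OF ui]) (use u in \<open>auto elim: eventually_mono\<close>)
  ultimately show ?thesis by eventually_elim auto
qed

lemma (in finite_measure_subalgebra) integral_mult_diff_real_cond_exp:
  fixes g u :: "'a \<Rightarrow> real"
  assumes g: "integrable M g" and [measurable]: "u \<in> borel_measurable M"
    and u: "AE x in M. \<bar>u x\<bar> \<le> C"
  shows "(\<integral>x. g x * (u x - real_cond_exp M F u x) \<partial>M) = (\<integral>x. (g x - real_cond_exp M F g x) * u x \<partial>M)"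
proof -
  let ?Eu = "real_cond_exp M F u" and ?Eg = "real_cond_exp M F g"
  have [measurable]: "g \<in> borel_measurable M" using g by auto
  have [measurable]: "?Eu \<in> borel_measurable F" "?Eg \<in> borel_measurable F"
    by (rule borel_measurable_cond_exp)+
  have [measurable]: "?Eu \<in> borel_measurable M" by (rule borel_measurable_cond_exp2)
  have Eu: "AE x in M. \<bar>?Eu x\<bar> \<le> C" by (rule AE_abs_real_cond_exp_le[OF _ u]) simp
  have Egi: "integrable M ?Eg" by (rule real_cond_exp_int(1)[OF g])
  have gu: "integrable M (\<lambda>x. g x * u x)" by (rule integrable_mult_AE_bounded[OF g _ u]) simp
  have gEu: "integrable M (\<lambda>x. g x * ?Eu x)" by (rule integrable_mult_AE_bounded[OF g _ Eu]) simp
  have Egu: "integrable M (\<lambda>x. ?Eg x * u x)" by (rule integrable_mult_AE_bounded[OF Egi _ u]) simp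
  have "(\<integral>x. g x * ?Eu x \<partial>M) = (\<integral>x. ?Eu x * ?Eg x \<partial>M)"
    using real_cond_exp_intg(2)[of ?Eu g] gEu by (simp add: mult.commute)
  also have "\<dots> = (\<integral>x. ?Eg x * u x \<partial>M)"
    using real_cond_exp_intg(2)[of ?Eg u] Egu by (simp add: mult.commute)
  finally have "(\<integral>x. g x * ?Eu x \<partial>M) = (\<integral>x. ?Eg x * u x \<partial>M)" .
  then show ?thesis using gu gEu Egu by (simp add: right_diff_distrib left_diff_distrib)
qed

section \<open>The span \<open>O\<^sub>f\<close> and the \<open>\<sigma>\<close>-algebra \<open>\<sigma>(f)\<close>\<close>

definition ramp :: "real \<Rightarrow> nat \<Rightarrow> real \<Rightarrow> real" where
  "ramp a n t = 1 - (real n + 1) * max (t - a) 0 + (real n + 1) * max (t - (a + 1 / (real n + 1))) 0"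

lemma ramp_left: "t \<le> a \<Longrightarrow> ramp a n t = 1"
proof -
  assume "t \<le> a"
  moreover have "t \<le> a + 1 / (real n + 1)" using \<open>t \<le> a\<close> by (simp add: add_increasing2)
  ultimately show ?thesis unfolding ramp_def by simp
qed

lemma ramp_right: "a + 1 / (real n + 1) \<le> t \<Longrightarrow> ramp a n t = 0"
proof -
  assume t: "a + 1 / (real n + 1) \<le> t"
  moreover have "0 \<le> 1 / (real n + 1)" by simp
  ultimately have "0 \<le> t - a" "0 \<le> t - (a + 1 / (real n + 1))" by linarith+
  then have "max (t - a) 0 = t - a" "max (t - (a + 1 / (real n + 1))) 0 = t - (a + 1 / (real n + 1))"
    by simp_all
  then have "ramp a n t = 1 - (real n + 1) * (1 / (real n + 1))"
    unfolding ramp_def by (simp add: algebra_simps)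
  also have "\<dots> = 0" by simp
  finally show ?thesis .
qed

lemma ramp_bounds: "0 \<le> ramp a n t \<and> ramp a n t \<le> 1"
proof (cases "a < t \<and> t < a + 1 / (real n + 1)")
  case True
  then have "ramp a n t = 1 - (real n + 1) * (t - a)" unfolding ramp_def by simp
  moreover have "(real n + 1) * (t - a) \<le> (real n + 1) * (1 / (real n + 1))"
    using True by (intro mult_left_mono) auto
  moreover have "0 \<le> (real n + 1) * (t - a)" using True by simp
  ultimately show ?thesis by simp
next
  case False
  then show ?thesis using ramp_left ramp_right by (metis linorder_not_le order_refl zero_le_one)
qed

lemma LIMSEQ_ramp: "(\<lambda>n. ramp a n t) \<longlonglongrightarrow> (if t \<le> a then 1 else 0)"
proof (cases "t \<le> a")
  case True then show ?thesis by (simp add: ramp_left)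
next
  case False
  then have "(\<lambda>n. a + 1 / (real n + 1)) \<longlonglongrightarrow> a + 0"
    using LIMSEQ_inverse_real_of_nat by (intro tendsto_add tendsto_const) (simp add: inverse_eq_divide add.commute)
  then have "eventually (\<lambda>n. a + 1 / (real n + 1) < t) sequentially"
    using False by (intro order_tendstoD) auto
  then have "eventually (\<lambda>n. ramp a n t = 0) sequentially"
    by eventually_elim (simp add: ramp_right)
  then show ?thesis using False by (simp add: tendsto_eventually)
qed

lemma O_span_const: "(\<lambda>_. c) \<in> O_span f"
  unfolding O_span_def by (intro CollectI exI[of _ c] exI[of _ "\<lambda>_. 0"] exI[of _ "{}"]) auto

lemma O_span_scale:
  assumes "x \<in> O_span f" shows "(\<lambda>\<omega>. r * x \<omega>) \<in> O_span f"
proof -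
  obtain c a K where x: "x = (\<lambda>\<omega>. c + (\<Sum>k\<in>K. a k * max (f \<omega> - k) 0))" and K: "finite K"
    using assms unfolding O_span_def by blast
  have "(\<lambda>\<omega>. r * x \<omega>) = (\<lambda>\<omega>. r * c + (\<Sum>k\<in>K. (r * a k) * max (f \<omega> - k) 0))"
    unfolding x by (auto simp: algebra_simps sum_distrib_left)
  with K show ?thesis unfolding O_span_def
    by (intro CollectI exI[of _ "r * c"] exI[of _ "\<lambda>k. r * a k"] exI[of _ K]) auto
qed

lemma O_span_add:
  assumes "x \<in> O_span f" "y \<in> O_span f" shows "(\<lambda>\<omega>. x \<omega> + y \<omega>) \<in> O_span f"
proof -
  obtain c a K where x: "x = (\<lambda>\<omega>. c + (\<Sum>k\<in>K. a k * max (f \<omega> - k) 0))" and K: "finite K"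
    using assms unfolding O_span_def by blast
  obtain d b L where y: "y = (\<lambda>\<omega>. d + (\<Sum>k\<in>L. b k * max (f \<omega> - k) 0))" and L: "finite L"
    using assms unfolding O_span_def by blast
  define e where "e k = (if k \<in> K then a k else 0) + (if k \<in> L then b k else 0)" for k
  have extend: "(\<Sum>k\<in>J. c k * h k) = (\<Sum>k\<in>K \<union> L. (if k \<in> J then c k else 0) * h k)"
    if "J \<subseteq> K \<union> L" for J c and h :: "real \<Rightarrow> real"
    using that K L by (intro sum.mono_neutral_cong_left) auto
  have "(\<lambda>\<omega>. x \<omega> + y \<omega>) = (\<lambda>\<omega>. (c + d) + (\<Sum>k\<in>K \<union> L. e k * max (f \<omega> - k) 0))"
    unfolding x y e_def
    by (auto simp: extend[of K] extend[of L] distrib_right sum.distrib)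
  with K L show ?thesis unfolding O_span_def by blast
qed

lemma ramp_in_O_span: "(\<lambda>\<omega>. ramp a n (f \<omega>)) \<in> O_span f"
proof -
  let ?K = "{a, a + 1 / (real n + 1)}"
  define c where "c k = (if k = a then - (real n + 1) else real n + 1)" for k
  have "a \<noteq> a + 1 / (real n + 1)" by simp
  then have "ramp a n (f \<omega>) = 1 + (\<Sum>k\<in>?K. c k * max (f \<omega> - k) 0)" for \<omega>
    unfolding ramp_def c_def by (simp add: algebra_simps)
  then show ?thesis unfolding O_span_def by (intro CollectI exI[of _ 1] exI[of _ c] exI[of _ ?K]) auto
qed

lemma O_span_measurable: "f \<in> borel_measurable N \<Longrightarrow> x \<in> O_span f \<Longrightarrow> x \<in> borel_measurable N"
  unfolding O_span_def by auto

lemma sigma_of_generators_subset: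
  "f \<in> borel_measurable M \<Longrightarrow> {f -` B \<inter> space M | B. B \<in> sets borel} \<union> null_sets M \<subseteq> sets M"
  by (auto intro: measurable_sets)

lemma
  assumes "f \<in> borel_measurable M"
  shows space_sigma_of: "space (sigma_of M f) = space M"
    and sets_sigma_of: "sets (sigma_of M f) =
      sigma_sets (space M) ({f -` B \<inter> space M | B. B \<in> sets borel} \<union> null_sets M)"
  using sigma_of_generators_subset[OF assms] sets.sets_into_space unfolding sigma_of_def
  by (subst space_measure_of sets_measure_of; blast)+

lemma sets_sigma_of_subset: "f \<in> borel_measurable M \<Longrightarrow> sets (sigma_of M f) \<subseteq> sets M"
  unfolding sets_sigma_of by (rule sets.sigma_sets_subset[OF sigma_of_generators_subset])

lemma null_sets_in_sigma_of: "f \<in> borel_measurable M \<Longrightarrow> N \<in> null_sets M \<Longrightarrow> N \<in> sets (sigma_of M f)"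
  unfolding sets_sigma_of by auto

lemma subalgebra_sigma_of:
  assumes "f \<in> borel_measurable M" "sets N = sets M" "space N = space M"
  shows "subalgebra N (sigma_of M f)"
  unfolding subalgebra_def using assms space_sigma_of[OF assms(1)] sets_sigma_of_subset[OF assms(1)] by auto

lemma measurable_sigma_of: "f \<in> borel_measurable M \<Longrightarrow> f \<in> borel_measurable (sigma_of M f)"
  by (rule measurableI) (auto simp: space_sigma_of sets_sigma_of)

lemma sigma_of_measurable_AE_cong:
  fixes g h :: "'a \<Rightarrow> real"
  assumes f: "f \<in> borel_measurable M"
    and h: "h \<in> borel_measurable (sigma_of M f)" and g: "g \<in> borel_measurable M"
    and ae: "AE \<omega> in M. g \<omega> = h \<omega>"
  shows "g \<in> borel_measurable (sigma_of M f)"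
proof -
  obtain N where N: "\<And>\<omega>. \<omega> \<in> space M - N \<Longrightarrow> g \<omega> = h \<omega>" "N \<in> null_sets M"
    using AE_E3[OF ae] by blast
  show ?thesis unfolding borel_measurable_iff_le space_sigma_of[OF f]
  proof
    fix a :: real
    have eq: "{\<omega> \<in> space M. g \<omega> \<le> a} = ({\<omega> \<in> space M. h \<omega> \<le> a} - N) \<union> ({\<omega> \<in> space M. g \<omega> \<le> a} \<inter> N)"
      using N(1) by auto
    have "{\<omega> \<in> space M. h \<omega> \<le> a} \<in> sets (sigma_of M f)"
      using h unfolding borel_measurable_iff_le space_sigma_of[OF f] by blast
    moreover have "N \<in> sets (sigma_of M f)" by (rule null_sets_in_sigma_of[OF f N(2)])
    moreover have "{\<omega> \<in> space M. g \<omega> \<le> a} \<inter> N \<in> sets (sigma_of M f)"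
      by (rule null_sets_in_sigma_of[OF f null_set_Int1[OF N(2)]]) (use g in measurable)
    ultimately have "({\<omega> \<in> space M. h \<omega> \<le> a} - N) \<union> ({\<omega> \<in> space M. g \<omega> \<le> a} \<inter> N) \<in> sets (sigma_of M f)"
      by (intro sets.Un sets.Diff)
    then show "{\<omega> \<in> space M. g \<omega> \<le> a} \<in> sets (sigma_of M f)" by (subst eq)
  qed
qed

lemma sigma_of_measurable_AE_LIMSEQ:
  fixes gs :: "nat \<Rightarrow> 'a \<Rightarrow> real"
  assumes f: "f \<in> borel_measurable M"
    and gs: "\<And>n. gs n \<in> borel_measurable (sigma_of M f)" and g: "g \<in> borel_measurable M"
    and conv: "AE \<omega> in M. (\<lambda>n. gs n \<omega>) \<longlonglongrightarrow> g \<omega>"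
  shows "g \<in> borel_measurable (sigma_of M f)"
proof -
  obtain N where N: "\<And>\<omega>. \<omega> \<in> space M - N \<Longrightarrow> (\<lambda>n. gs n \<omega>) \<longlonglongrightarrow> g \<omega>" "N \<in> null_sets M"
    using AE_E3[OF conv] by blast
  have [measurable]: "N \<in> sets (sigma_of M f)" by (rule null_sets_in_sigma_of[OF f N(2)])
  define h where "h \<omega> = (if \<omega> \<in> N then 0 else g \<omega>)" for \<omega>
  have "h \<in> borel_measurable (sigma_of M f)"
  proof (rule borel_measurable_LIMSEQ_real[where u = "\<lambda>n \<omega>. if \<omega> \<in> N then 0 else gs n \<omega>"])
    show "(\<lambda>n. if \<omega> \<in> N then 0 else gs n \<omega>) \<longlonglongrightarrow> h \<omega>" if "\<omega> \<in> space (sigma_of M f)" for \<omega>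
      using that N(1)[of \<omega>] space_sigma_of[OF f] unfolding h_def by auto
    show "(\<lambda>\<omega>. if \<omega> \<in> N then 0 else gs n \<omega>) \<in> borel_measurable (sigma_of M f)" for n
      using gs[of n] by measurable
  qed
  moreover have "AE \<omega> in M. g \<omega> = h \<omega>"
    using AE_not_in[OF N(2)] by eventually_elim (simp add: h_def)
  ultimately show ?thesis by (rule sigma_of_measurable_AE_cong[OF f _ g])
qed

lemma Int_stable_halflines:
  fixes f :: "'a \<Rightarrow> real"
  assumes f: "f \<in> borel_measurable M"
  shows "Int_stable ({f -` {..a} \<inter> space M | a. True} \<union> null_sets M)"
  unfolding Int_stable_def
proof (intro ballI)
  fix A B assume A: "A \<in> {f -` {..a} \<inter> space M | a. True} \<union> null_sets M"
    and B: "B \<in> {f -` {..a} \<inter> space M | a. True} \<union> null_sets M"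
  show "A \<inter> B \<in> {f -` {..a} \<inter> space M | a. True} \<union> null_sets M"
  proof (cases "A \<in> null_sets M \<or> B \<in> null_sets M")
    case True
    moreover have "A \<in> sets M" "B \<in> sets M" using A B by (auto intro!: measurable_sets[OF f])
    ultimately show ?thesis using null_set_Int1 null_set_Int2 by blast
  next
    case False
    then obtain a b where "A = f -` {..a} \<inter> space M" "B = f -` {..b} \<inter> space M"
      using A B by blast
    then have "A \<inter> B = f -` {..min a b} \<inter> space M" by auto
    then show ?thesis by blast
  qed
qed

lemma sets_sigma_of_subset_halflines:
  fixes f :: "'a \<Rightarrow> real"
  assumes f: "f \<in> borel_measurable M"
  shows "sets (sigma_of M f) \<subseteq> sigma_sets (space M) ({f -` {..a} \<inter> space M | a. True} \<union> null_sets M)"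
    (is "_ \<subseteq> sigma_sets _ ?H")
proof -
  have H: "?H \<subseteq> Pow (space M)" using sets.sets_into_space f by (auto intro: null_setsD2)
  have "f \<in> borel_measurable (sigma (space M) ?H)"
  proof (rule borel_measurableI_le)
    fix a :: real
    have "{\<omega> \<in> space M. f \<omega> \<le> a} = f -` {..a} \<inter> space M" by auto
    then show "{\<omega> \<in> space (sigma (space M) ?H). f \<omega> \<le> a} \<in> sets (sigma (space M) ?H)"
      using H by auto
  qed
  then have "{f -` B \<inter> space M | B. B \<in> sets borel} \<subseteq> sigma_sets (space M) ?H"
    using H by (auto dest: measurable_sets)
  moreover have "null_sets M \<subseteq> sigma_sets (space M) ?H" by auto
  ultimately have "{f -` B \<inter> space M | B. B \<in> sets borel} \<union> null_sets M \<subseteq> sigma_sets (space M) ?H"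
    by (rule Un_least)
  then show ?thesis unfolding sets_sigma_of[OF f] by (rule sigma_sets_mono)
qed

section \<open>Ideals of \<open>L\<^sub>0\<close> and order continuous functionals\<close>

locale L0_ideal_space = prob_space M for M :: "'a measure" +
  fixes X :: "('a \<Rightarrow> real) set"
  assumes L0_ideal: "L0_ideal M X" and X_const: "(\<lambda>_. c) \<in> X"
begin

lemma X_measurable: "x \<in> X \<Longrightarrow> x \<in> borel_measurable M"
  using L0_ideal unfolding L0_ideal_def by blast

lemma X_add: "x \<in> X \<Longrightarrow> y \<in> X \<Longrightarrow> (\<lambda>\<omega>. x \<omega> + y \<omega>) \<in> X"
  using L0_ideal unfolding L0_ideal_def by blast

lemma X_scale: "x \<in> X \<Longrightarrow> (\<lambda>\<omega>. c * x \<omega>) \<in> X"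
  using L0_ideal unfolding L0_ideal_def by blast

lemma X_dominated: "x \<in> borel_measurable M \<Longrightarrow> y \<in> X \<Longrightarrow> (AE \<omega> in M. \<bar>x \<omega>\<bar> \<le> \<bar>y \<omega>\<bar>) \<Longrightarrow> x \<in> X"
  using L0_ideal unfolding L0_ideal_def by blast

lemma X_diff: "x \<in> X \<Longrightarrow> y \<in> X \<Longrightarrow> (\<lambda>\<omega>. x \<omega> - y \<omega>) \<in> X"
  using X_add[of x "\<lambda>\<omega>. (-1) * y \<omega>"] X_scale[of y "-1"] by simp

lemma X_abs: "x \<in> X \<Longrightarrow> (\<lambda>\<omega>. \<bar>x \<omega>\<bar>) \<in> X"
  by (rule X_dominated) (auto dest: X_measurable)

lemma X_sum: "finite I \<Longrightarrow> (\<And>i. i \<in> I \<Longrightarrow> h i \<in> X) \<Longrightarrow> (\<lambda>\<omega>. \<Sum>i\<in>I. c i * h i \<omega>) \<in> X"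
proof (induction I rule: finite_induct)
  case empty then show ?case using X_const[of 0] by simp
next
  case (insert i I)
  then show ?case using X_add[OF X_scale[of "h i" "c i"], of "\<lambda>\<omega>. \<Sum>i\<in>I. c i * h i \<omega>"] by simp
qed

lemma X_bounded: "b \<in> borel_measurable M \<Longrightarrow> (\<And>\<omega>. \<bar>b \<omega>\<bar> \<le> C) \<Longrightarrow> b \<in> X"
  by (rule X_dominated[OF _ X_const[of C]]) (auto intro!: AE_I2 intro: order_trans[OF _ abs_ge_self])

lemma X_indicator: "A \<in> sets M \<Longrightarrow> indicator A \<in> X"
  by (rule X_bounded[of _ 1]) (auto simp: indicator_def)

lemma X_mult_bounded:
  assumes x: "x \<in> X" and [measurable]: "w \<in> borel_measurable M" and bound: "AE \<omega> in M. \<bar>w \<omega>\<bar> \<le> C"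
  shows "(\<lambda>\<omega>. x \<omega> * w \<omega>) \<in> X"
proof (rule X_dominated[OF _ X_scale[OF x, of C]])
  show "(\<lambda>\<omega>. x \<omega> * w \<omega>) \<in> borel_measurable M" using X_measurable[OF x] by measurable
  show "AE \<omega> in M. \<bar>x \<omega> * w \<omega>\<bar> \<le> \<bar>C * x \<omega>\<bar>" using bound
  proof eventually_elim
    case (elim \<omega>)
    have "\<bar>x \<omega> * w \<omega>\<bar> \<le> \<bar>x \<omega>\<bar> * C" unfolding abs_mult using elim by (rule mult_left_mono) simp
    also have "\<dots> \<le> \<bar>C * x \<omega>\<bar>" by (simp add: abs_mult mult.commute mult_right_mono)
    finally show ?case .
  qed
qed

lemma O_span_subset_X: "f \<in> X \<Longrightarrow> O_span f \<subseteq> X"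
proof
  fix x assume f: "f \<in> X" and "x \<in> O_span f"
  then obtain c a K where x: "x = (\<lambda>\<omega>. c + (\<Sum>k\<in>K. a k * max (f \<omega> - k) 0))" and K: "finite K"
    unfolding O_span_def by blast
  have "(\<lambda>\<omega>. max (f \<omega> - k) 0) \<in> X" for k
  proof (rule X_dominated[OF _ X_add[OF X_abs[OF f] X_const[of "\<bar>k\<bar>"]]])
    show "(\<lambda>\<omega>. max (f \<omega> - k) 0) \<in> borel_measurable M" using X_measurable[OF f] by measurable
  qed (auto intro!: AE_I2)
  then show "x \<in> X" unfolding x using X_add[OF X_const X_sum[OF K]] by simp
qed

lemma lin_functional_add: "lin_functional M X \<phi> \<Longrightarrow> x \<in> X \<Longrightarrow> y \<in> X \<Longrightarrow> \<phi> (\<lambda>\<omega>. x \<omega> + y \<omega>) = \<phi> x + \<phi> y"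
  unfolding lin_functional_def by blast

lemma lin_functional_scale: "lin_functional M X \<phi> \<Longrightarrow> x \<in> X \<Longrightarrow> \<phi> (\<lambda>\<omega>. c * x \<omega>) = c * \<phi> x"
  unfolding lin_functional_def by blast

lemma lin_functional_zero: "lin_functional M X \<phi> \<Longrightarrow> \<phi> (\<lambda>_. 0) = 0"
  using lin_functional_scale[of \<phi> "\<lambda>_. 0" 0] X_const by simp

lemma lin_functional_AE_cong:
  "lin_functional M X \<phi> \<Longrightarrow> x \<in> X \<Longrightarrow> y \<in> X \<Longrightarrow> (AE \<omega> in M. x \<omega> = y \<omega>) \<Longrightarrow> \<phi> x = \<phi> y"
  unfolding lin_functional_def by blast

lemma lin_functional_diff: "lin_functional M X \<phi> \<Longrightarrow> x \<in> X \<Longrightarrow> y \<in> X \<Longrightarrow> \<phi> (\<lambda>\<omega>. x \<omega> - y \<omega>) = \<phi> x - \<phi> y"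
  using lin_functional_add[of \<phi> x "\<lambda>\<omega>. (-1) * y \<omega>"] lin_functional_scale[of \<phi> y "-1"] X_scale[of y "-1"]
  by simp

lemma lin_functional_sum:
  assumes \<phi>: "lin_functional M X \<phi>"
  shows "finite I \<Longrightarrow> (\<And>i. i \<in> I \<Longrightarrow> h i \<in> X) \<Longrightarrow> \<phi> (\<lambda>\<omega>. \<Sum>i\<in>I. c i * h i \<omega>) = (\<Sum>i\<in>I. c i * \<phi> (h i))"
proof (induction I rule: finite_induct)
  case empty then show ?case using lin_functional_zero[OF \<phi>] by simp
next
  case (insert i I)
  then have "\<phi> (\<lambda>\<omega>. \<Sum>j\<in>insert i I. c j * h j \<omega>) = \<phi> (\<lambda>\<omega>. c i * h i \<omega> + (\<Sum>j\<in>I. c j * h j \<omega>))"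
    by simp
  also have "\<dots> = c i * \<phi> (h i) + \<phi> (\<lambda>\<omega>. \<Sum>j\<in>I. c j * h j \<omega>)"
    using insert X_scale X_sum[of I h c]
    by (simp add: lin_functional_add[OF \<phi>] lin_functional_scale[OF \<phi>])
  finally show ?case using insert by simp
qed

lemma decr_to_zero_of_decseq:
  assumes zX: "\<And>n. z n \<in> X" and nonneg: "\<And>n \<omega>. 0 \<le> z n \<omega>"
    and dec: "\<And>m n \<omega>. n \<le> m \<Longrightarrow> z m \<omega> \<le> z n \<omega>"
    and lim: "AE \<omega> in M. (\<lambda>n. z n \<omega>) \<longlonglongrightarrow> 0"
  shows "decr_to_zero M X (range z)"
  unfolding decr_to_zero_def
proof (intro conjI ballI impI)
  fix z1 z2 assume "z1 \<in> range z" "z2 \<in> range z"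
  then obtain n1 n2 where "z1 = z n1" "z2 = z n2" by auto
  then show "\<exists>z3\<in>range z. (AE \<omega> in M. z3 \<omega> \<le> z1 \<omega>) \<and> (AE \<omega> in M. z3 \<omega> \<le> z2 \<omega>)"
    by (intro bexI[of _ "z (max n1 n2)"]) (auto intro!: AE_I2 dec)
next
  fix w assume "\<forall>z'\<in>range z. AE \<omega> in M. w \<omega> \<le> z' \<omega>"
  then have "AE \<omega> in M. \<forall>n. w \<omega> \<le> z n \<omega>" by (simp add: AE_all_countable)
  with lim show "AE \<omega> in M. w \<omega> \<le> 0"
  proof eventually_elim
    case (elim \<omega>)
    show ?case by (rule LIMSEQ_le_const[OF elim(1)]) (use elim(2) in blast)
  qed
qed (use zX nonneg in auto)

lemma decr_to_zero_scale:
  assumes Z: "decr_to_zero M X Z" and c: "0 < c"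
  shows "decr_to_zero M X ((\<lambda>z \<omega>. c * z \<omega>) ` Z)"
  unfolding decr_to_zero_def
proof (intro conjI ballI impI)
  have ZX: "Z \<subseteq> X" and "Z \<noteq> {}" using Z unfolding decr_to_zero_def by auto
  then show "(\<lambda>z \<omega>. c * z \<omega>) ` Z \<subseteq> X" "(\<lambda>z \<omega>. c * z \<omega>) ` Z \<noteq> {}" using X_scale by auto
next
  fix z1 z2 assume "z1 \<in> (\<lambda>z \<omega>. c * z \<omega>) ` Z" "z2 \<in> (\<lambda>z \<omega>. c * z \<omega>) ` Z"
  then obtain y1 y2 where y: "y1 \<in> Z" "y2 \<in> Z" "z1 = (\<lambda>\<omega>. c * y1 \<omega>)" "z2 = (\<lambda>\<omega>. c * y2 \<omega>)"
    by auto
  then obtain y3 where "y3 \<in> Z" "AE \<omega> in M. y3 \<omega> \<le> y1 \<omega>" "AE \<omega> in M. y3 \<omega> \<le> y2 \<omega>"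
    using Z unfolding decr_to_zero_def by blast
  with y c show "\<exists>z3\<in>(\<lambda>z \<omega>. c * z \<omega>) ` Z. (AE \<omega> in M. z3 \<omega> \<le> z1 \<omega>) \<and> (AE \<omega> in M. z3 \<omega> \<le> z2 \<omega>)"
    by (intro bexI[of _ "\<lambda>\<omega>. c * y3 \<omega>"]) (auto elim: eventually_mono)
next
  fix z assume "z \<in> (\<lambda>z \<omega>. c * z \<omega>) ` Z"
  then obtain y where y: "y \<in> Z" "z = (\<lambda>\<omega>. c * y \<omega>)" by auto
  with Z have "AE \<omega> in M. 0 \<le> y \<omega>" unfolding decr_to_zero_def by blast
  then show "AE \<omega> in M. 0 \<le> z \<omega>" unfolding y(2) by eventually_elim (use c in simp)
next
  fix w assume w: "w \<in> X" and wz: "\<forall>z\<in>(\<lambda>z \<omega>. c * z \<omega>) ` Z. AE \<omega> in M. w \<omega> \<le> z \<omega>"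
  have "\<forall>z\<in>Z. AE \<omega> in M. w \<omega> / c \<le> z \<omega>"
    using wz c by (auto elim!: eventually_mono simp: divide_le_eq mult.commute)
  moreover have "(\<lambda>\<omega>. (1 / c) * w \<omega>) \<in> X" by (rule X_scale[OF w])
  ultimately have "AE \<omega> in M. w \<omega> / c \<le> 0" using Z unfolding decr_to_zero_def by auto
  then show "AE \<omega> in M. w \<omega> \<le> 0" using c by (auto elim: eventually_mono simp: divide_le_0_iff)
qed

text \<open>The majorant is the tail supremum of the truncated deviations.\<close>

lemma decreasing_majorant_of_dominated_AE_LIMSEQ:
  assumes dX: "\<And>n. d n \<in> X" and c: "c \<in> X"
    and lim: "AE \<omega> in M. (\<lambda>n. d n \<omega>) \<longlonglongrightarrow> 0" and dom: "\<And>n. AE \<omega> in M. \<bar>d n \<omega>\<bar> \<le> c \<omega>"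
  shows "\<exists>z. (\<forall>n. z n \<in> X) \<and> (\<forall>n \<omega>. 0 \<le> z n \<omega>) \<and> (\<forall>m n \<omega>. n \<le> m \<longrightarrow> z m \<omega> \<le> z n \<omega>)
    \<and> (AE \<omega> in M. (\<lambda>n. z n \<omega>) \<longlonglongrightarrow> 0) \<and> (\<forall>m n. n \<le> m \<longrightarrow> (AE \<omega> in M. \<bar>d m \<omega>\<bar> \<le> z n \<omega>))"
proof -
  define z where "z n \<omega> = (SUP m\<in>{n..}. min \<bar>d m \<omega>\<bar> \<bar>c \<omega>\<bar>)" for n \<omega>
  have bdd: "bdd_above ((\<lambda>m. min \<bar>d m \<omega>\<bar> \<bar>c \<omega>\<bar>) ` {n..})" for n \<omega>
    by (rule bdd_aboveI[of _ "\<bar>c \<omega>\<bar>"]) auto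
  have z_ge: "min \<bar>d m \<omega>\<bar> \<bar>c \<omega>\<bar> \<le> z n \<omega>" if "n \<le> m" for n m \<omega>
    unfolding z_def by (rule cSUP_upper[OF _ bdd]) (use that in auto)
  have z_le: "z n \<omega> \<le> e" if "\<And>m. n \<le> m \<Longrightarrow> min \<bar>d m \<omega>\<bar> \<bar>c \<omega>\<bar> \<le> e" for n \<omega> e
    unfolding z_def by (rule cSUP_least) (use that in auto)
  have nonneg: "0 \<le> z n \<omega>" for n \<omega> by (rule order_trans[OF _ z_ge[of n n]]) simp_all
  have dec: "z m \<omega> \<le> z n \<omega>" if "n \<le> m" for m n \<omega>
    by (rule z_le) (use that in \<open>simp add: z_ge\<close>)
  have zX: "z n \<in> X" for n
  proof (rule X_dominated[OF _ c])
    show "z n \<in> borel_measurable M"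
      unfolding z_def using X_measurable[OF dX] X_measurable[OF c]
      by (intro borel_measurable_cSUP bdd) auto
    show "AE \<omega> in M. \<bar>z n \<omega>\<bar> \<le> \<bar>c \<omega>\<bar>" by (rule AE_I2) (simp add: nonneg z_le)
  qed
  have zlim: "AE \<omega> in M. (\<lambda>n. z n \<omega>) \<longlonglongrightarrow> 0" using lim
  proof eventually_elim
    case (elim \<omega>)
    have "(\<lambda>m. min \<bar>d m \<omega>\<bar> \<bar>c \<omega>\<bar>) \<longlonglongrightarrow> min 0 \<bar>c \<omega>\<bar>"
      by (intro tendsto_min tendsto_rabs_zero elim tendsto_const)
    then show ?case unfolding z_def by (intro LIMSEQ_tail_SUP) (auto intro: bdd_aboveI[of _ "\<bar>c \<omega>\<bar>"])
  qed
  have "AE \<omega> in M. \<bar>d m \<omega>\<bar> \<le> z n \<omega>" if "n \<le> m" for m n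
    using dom[of m]
  proof eventually_elim
    case (elim \<omega>)
    then have "min \<bar>d m \<omega>\<bar> \<bar>c \<omega>\<bar> = \<bar>d m \<omega>\<bar>" by simp
    with z_ge[OF that, of \<omega>] show ?case by simp
  qed
  with zX nonneg dec zlim show ?thesis by blast
qed

lemma order_conv_of_dominated_AE_LIMSEQ:
  assumes "\<And>n. d n \<in> X" "c \<in> X"
    and "AE \<omega> in M. (\<lambda>n. d n \<omega>) \<longlonglongrightarrow> 0" "\<And>n. AE \<omega> in M. \<bar>d n \<omega>\<bar> \<le> c \<omega>"
  shows "order_conv M X (filtermap d sequentially) (\<lambda>_. 0)"
proof -
  obtain z where zX: "\<forall>n. z n \<in> X" and nonneg: "\<forall>n \<omega>. 0 \<le> z n \<omega>"
    and dec: "\<forall>m n \<omega>. n \<le> m \<longrightarrow> z m \<omega> \<le> z n \<omega>" and zlim: "AE \<omega> in M. (\<lambda>n. z n \<omega>) \<longlonglongrightarrow> 0"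
    and major: "\<forall>m n. n \<le> m \<longrightarrow> (AE \<omega> in M. \<bar>d m \<omega>\<bar> \<le> z n \<omega>)"
    using decreasing_majorant_of_dominated_AE_LIMSEQ[OF assms] by blast
  have "decr_to_zero M X (range z)" by (rule decr_to_zero_of_decseq) (use zX nonneg dec zlim in auto)
  moreover have "eventually (\<lambda>m. AE \<omega> in M. \<bar>d m \<omega> - 0\<bar> \<le> z n \<omega>) sequentially" for n
    using major unfolding eventually_sequentially by auto
  ultimately show ?thesis
    unfolding order_conv_def eventually_filtermap using X_const by blast
qed

lemma order_dual_LIMSEQ_dominated:
  assumes \<phi>: "\<phi> \<in> order_dual_n M X"
    and ys: "\<And>n. ys n \<in> X" and y: "y \<in> X" and u: "u \<in> X"
    and lim: "AE \<omega> in M. (\<lambda>n. ys n \<omega>) \<longlonglongrightarrow> y \<omega>"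
    and dom: "\<And>n. AE \<omega> in M. \<bar>ys n \<omega>\<bar> \<le> \<bar>u \<omega>\<bar>"
  shows "(\<lambda>n. \<phi> (ys n)) \<longlonglongrightarrow> \<phi> y"
proof -
  define d where "d n \<omega> = ys n \<omega> - y \<omega>" for n \<omega>
  have dX: "d n \<in> X" for n unfolding d_def using X_diff[OF ys y] .
  have "order_conv M X (filtermap d sequentially) (\<lambda>_. 0)"
  proof (rule order_conv_of_dominated_AE_LIMSEQ[OF dX X_add[OF X_abs[OF u] X_abs[OF y]]])
    show "AE \<omega> in M. (\<lambda>n. d n \<omega>) \<longlonglongrightarrow> 0"
      using lim by eventually_elim (simp add: d_def LIM_zero)
    show "AE \<omega> in M. \<bar>d n \<omega>\<bar> \<le> \<bar>u \<omega>\<bar> + \<bar>y \<omega>\<bar>" for n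
      using dom[of n] by eventually_elim (auto simp: d_def)
  qed
  moreover have "eventually (\<lambda>x. x \<in> X) (filtermap d sequentially)"
    unfolding eventually_filtermap using dX by simp
  moreover have "order_continuous M X \<phi>" and lf: "lin_functional M X \<phi>"
    using \<phi> unfolding order_dual_n_def by auto
  ultimately have "(\<phi> \<longlongrightarrow> 0) (filtermap d sequentially)" unfolding order_continuous_def by blast
  then have "(\<lambda>n. \<phi> (d n)) \<longlonglongrightarrow> 0" unfolding filterlim_filtermap .
  then show ?thesis unfolding d_def lin_functional_diff[OF lf ys y] by (simp add: LIM_zero_cancel)
qed

lemma order_conv_mult_bounded:
  assumes conv: "order_conv M X F (\<lambda>_. 0)" and w: "AE \<omega> in M. \<bar>w \<omega>\<bar> \<le> C"
  shows "order_conv M X (filtermap (\<lambda>x \<omega>. x \<omega> * w \<omega>) F) (\<lambda>_. 0)"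
proof -
  obtain Z where Z: "decr_to_zero M X Z"
    and ZF: "\<forall>z\<in>Z. eventually (\<lambda>x. AE \<omega> in M. \<bar>x \<omega> - 0\<bar> \<le> z \<omega>) F"
    using conv unfolding order_conv_def by blast
  define c where "c = \<bar>C\<bar> + 1"
  have "eventually (\<lambda>x. AE \<omega> in M. \<bar>x \<omega> * w \<omega> - 0\<bar> \<le> c * z \<omega>) F" if z: "z \<in> Z" for z
    using bspec[OF ZF z]
  proof (rule eventually_mono)
    fix x assume "AE \<omega> in M. \<bar>x \<omega> - 0\<bar> \<le> z \<omega>"
    then show "AE \<omega> in M. \<bar>x \<omega> * w \<omega> - 0\<bar> \<le> c * z \<omega>" using w
    proof eventually_elim
      case (elim \<omega>)
      have "\<bar>x \<omega> * w \<omega>\<bar> = \<bar>x \<omega>\<bar> * \<bar>w \<omega>\<bar>" by (simp add: abs_mult)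
      also have "\<dots> \<le> z \<omega> * c" using elim by (intro mult_mono) (auto simp: c_def)
      finally show ?case by (simp add: mult.commute)
    qed
  qed
  moreover have "decr_to_zero M X ((\<lambda>z \<omega>. c * z \<omega>) ` Z)" by (rule decr_to_zero_scale[OF Z]) (simp add: c_def)
  ultimately show ?thesis
    unfolding order_conv_def eventually_filtermap using X_const by blast
qed

lemma order_dual_mult_bounded:
  assumes \<phi>: "\<phi> \<in> order_dual_n M X"
    and [measurable]: "w \<in> borel_measurable M" and w: "AE \<omega> in M. \<bar>w \<omega>\<bar> \<le> C"
  shows "(\<lambda>x. \<phi> (\<lambda>\<omega>. x \<omega> * w \<omega>)) \<in> order_dual_n M X"
proof -
  let ?m = "\<lambda>x \<omega>. x \<omega> * w \<omega>"
  have lf: "lin_functional M X \<phi>" and oc: "order_continuous M X \<phi>"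
    using \<phi> unfolding order_dual_n_def by auto
  have mX: "?m x \<in> X" if "x \<in> X" for x by (rule X_mult_bounded[OF that _ w]) simp
  have "lin_functional M X (\<lambda>x. \<phi> (?m x))"
    unfolding lin_functional_def
  proof (intro conjI ballI allI impI)
    fix x y assume x: "x \<in> X" and y: "y \<in> X"
    show "\<phi> (?m x) = \<phi> (?m y)" if "AE \<omega> in M. x \<omega> = y \<omega>"
      by (rule lin_functional_AE_cong[OF lf mX[OF x] mX[OF y]]) (use that in auto)
    have "?m (\<lambda>\<omega>. x \<omega> + y \<omega>) = (\<lambda>\<omega>. ?m x \<omega> + ?m y \<omega>)" by (simp add: distrib_right)
    then show "\<phi> (?m (\<lambda>\<omega>. x \<omega> + y \<omega>)) = \<phi> (?m x) + \<phi> (?m y)"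
      using lin_functional_add[OF lf mX[OF x] mX[OF y]] by simp
  next
    fix c :: real and x assume x: "x \<in> X"
    have "?m (\<lambda>\<omega>. c * x \<omega>) = (\<lambda>\<omega>. c * ?m x \<omega>)" by (simp add: mult.assoc)
    then show "\<phi> (?m (\<lambda>\<omega>. c * x \<omega>)) = c * \<phi> (?m x)"
      using lin_functional_scale[OF lf mX[OF x]] by simp
  qed
  moreover have "order_continuous M X (\<lambda>x. \<phi> (?m x))"
    unfolding order_continuous_def
  proof (intro allI impI)
    fix F assume "eventually (\<lambda>x. x \<in> X) F" "order_conv M X F (\<lambda>_. 0)"
    then have "eventually (\<lambda>x. x \<in> X) (filtermap ?m F)" "order_conv M X (filtermap ?m F) (\<lambda>_. 0)"
      unfolding eventually_filtermap by (auto elim!: eventually_mono intro: mX order_conv_mult_bounded[OF _ w])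
    then have "(\<phi> \<longlongrightarrow> 0) (filtermap ?m F)" using oc unfolding order_continuous_def by blast
    then show "((\<lambda>x. \<phi> (?m x)) \<longlongrightarrow> 0) F" unfolding filterlim_filtermap .
  qed
  ultimately show ?thesis unfolding order_dual_n_def by blast
qed

section \<open>The weak topology\<close>

lemma topspace_weak_top: "topspace (weak_top M X) = X"
  unfolding weak_top_def topology_generated_by_topspace by auto

lemma openin_weak_top_functional:
  "\<phi> \<in> order_dual_n M X \<Longrightarrow> open U \<Longrightarrow> openin (weak_top M X) {x \<in> X. \<phi> x \<in> U}"
  unfolding weak_top_def by (intro topology_generated_by_Basis) blast

lemma weak_closure_subset_X: "weak_top M X closure_of S \<subseteq> X"
  using closure_of_subset_topspace topspace_weak_top by metis

lemma openin_weak_top_eventually: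
  assumes T: "openin (weak_top M X) T" "y \<in> T" and ys: "\<And>n. ys n \<in> X"
    and lim: "\<And>\<phi>. \<phi> \<in> order_dual_n M X \<Longrightarrow> (\<lambda>n. \<phi> (ys n)) \<longlonglongrightarrow> \<phi> y"
  shows "eventually (\<lambda>n. ys n \<in> T) sequentially"
proof -
  let ?B = "insert X {{x \<in> X. \<phi> x \<in> U} | \<phi> U. \<phi> \<in> order_dual_n M X \<and> open U}"
  have "generate_topology_on ?B T" using T(1) unfolding weak_top_def openin_topology_generated_by_iff .
  then show ?thesis using T(2)
  proof (induction rule: generate_topology_on.induct)
    case (Int a b) then show ?case by (auto intro: eventually_conj)
  next
    case (UN K)
    then obtain k where "k \<in> K" "y \<in> k" by auto
    with UN have "eventually (\<lambda>n. ys n \<in> k) sequentially" by blast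
    then show ?case by (rule eventually_mono) (use \<open>k \<in> K\<close> in auto)
  next
    case (Basis s)
    then consider "s = X" | \<phi> U where "s = {x \<in> X. \<phi> x \<in> U}" "\<phi> \<in> order_dual_n M X" "open U"
      by blast
    then show ?case
    proof cases
      case 1 then show ?thesis using ys by (auto intro!: always_eventually)
    next
      case 2
      with Basis.prems have "\<phi> y \<in> U" by simp
      then have "eventually (\<lambda>n. \<phi> (ys n) \<in> U) sequentially"
        by (rule topological_tendstoD[OF lim[OF 2(2)] 2(3)])
      then show ?thesis using 2 ys by (auto elim!: eventually_mono)
    qed
  qed simp
qed

lemma in_weak_closure_of_LIMSEQ:
  assumes y: "y \<in> X" and ys: "\<And>n. ys n \<in> S" and SX: "S \<subseteq> X"
    and lim: "\<And>\<phi>. \<phi> \<in> order_dual_n M X \<Longrightarrow> (\<lambda>n. \<phi> (ys n)) \<longlonglongrightarrow> \<phi> y"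
  shows "y \<in> weak_top M X closure_of S"
  unfolding in_closure_of topspace_weak_top
proof (intro conjI allI impI)
  fix T assume T: "y \<in> T \<and> openin (weak_top M X) T"
  have "eventually (\<lambda>n. ys n \<in> T) sequentially"
  proof (rule openin_weak_top_eventually[of T y ys])
    show "openin (weak_top M X) T" "y \<in> T" using T by auto
    show "ys n \<in> X" for n using ys SX by blast
    show "(\<lambda>n. \<phi> (ys n)) \<longlonglongrightarrow> \<phi> y" if "\<phi> \<in> order_dual_n M X" for \<phi> using lim[OF that] .
  qed
  then obtain n where "ys n \<in> T" using eventually_happens' by (metis sequentially_bot)
  then show "\<exists>s. s \<in> S \<and> s \<in> T" using ys by blast
qed (rule y)

lemma continuous_map_weak_top_affine:
  assumes d: "d \<in> X"
  shows "continuous_map (weak_top M X) (weak_top M X) (\<lambda>x \<omega>. c * x \<omega> + d \<omega>)"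
  unfolding weak_top_def
proof (rule continuous_on_generated_topo)
  let ?m = "\<lambda>x \<omega>. c * x \<omega> + d \<omega>"
  let ?B = "insert X {{x \<in> X. \<phi> x \<in> U} | \<phi> U. \<phi> \<in> order_dual_n M X \<and> open U}"
  have mX: "?m x \<in> X" if "x \<in> X" for x using X_add[OF X_scale[OF that] d] .
  have top: "topspace (topology_generated_by ?B) = X" using topspace_weak_top unfolding weak_top_def .
  show "?m ` topspace (topology_generated_by ?B) \<subseteq> \<Union> ?B" using mX top by auto
  fix U assume "U \<in> ?B"
  then consider "U = X" | \<phi> V where "U = {x \<in> X. \<phi> x \<in> V}" "\<phi> \<in> order_dual_n M X" "open V"
    by blast
  then show "openin (topology_generated_by ?B) (?m -` U \<inter> topspace (topology_generated_by ?B))"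
  proof cases
    case 1
    then have "?m -` U \<inter> topspace (topology_generated_by ?B) = topspace (topology_generated_by ?B)"
      using mX top by auto
    then show ?thesis by (simp only: openin_topspace)
  next
    case 2
    have lf: "lin_functional M X \<phi>" using 2 unfolding order_dual_n_def by auto
    define V' where "V' = (\<lambda>t. c * t + \<phi> d) -` V"
    have "?m -` U \<inter> topspace (topology_generated_by ?B) = {x \<in> X. \<phi> x \<in> V'}"
      using mX top 2(1) lin_functional_add[OF lf X_scale d] lin_functional_scale[OF lf]
      unfolding V'_def by auto
    moreover have "open V'" unfolding V'_def by (intro open_vimage[OF 2(3)] continuous_intros)
    ultimately show ?thesis using openin_weak_top_functional[OF 2(2)] unfolding weak_top_def by simp
  qed
qed

lemma weak_closure_affine:
  assumes SX: "S \<subseteq> X" and d: "d \<in> X" and x: "x \<in> weak_top M X closure_of S"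
    and S: "\<And>s. s \<in> S \<Longrightarrow> (\<lambda>\<omega>. c * s \<omega> + d \<omega>) \<in> weak_top M X closure_of S"
  shows "(\<lambda>\<omega>. c * x \<omega> + d \<omega>) \<in> weak_top M X closure_of S"
proof -
  have "(\<lambda>x \<omega>. c * x \<omega> + d \<omega>) ` (weak_top M X closure_of S)
      \<subseteq> weak_top M X closure_of ((\<lambda>x \<omega>. c * x \<omega> + d \<omega>) ` S)"
    by (rule continuous_map_image_closure_subset[OF continuous_map_weak_top_affine[OF d]])
  also have "\<dots> \<subseteq> weak_top M X closure_of (weak_top M X closure_of S)"
    by (rule closure_of_mono) (use S in auto)
  finally show ?thesis using x by auto
qed

lemma weak_closure_scale:
  assumes "S \<subseteq> X" "\<And>s. s \<in> S \<Longrightarrow> (\<lambda>\<omega>. c * s \<omega>) \<in> S" "x \<in> weak_top M X closure_of S"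
  shows "(\<lambda>\<omega>. c * x \<omega>) \<in> weak_top M X closure_of S"
  using weak_closure_affine[OF assms(1) X_const[of 0] assms(3), of c] assms(1,2)
    closure_of_subset[of S "weak_top M X"] topspace_weak_top by auto

lemma weak_closure_add:
  assumes SX: "S \<subseteq> X" and S: "\<And>s t. s \<in> S \<Longrightarrow> t \<in> S \<Longrightarrow> (\<lambda>\<omega>. s \<omega> + t \<omega>) \<in> S"
    and x: "x \<in> weak_top M X closure_of S" and y: "y \<in> weak_top M X closure_of S"
  shows "(\<lambda>\<omega>. x \<omega> + y \<omega>) \<in> weak_top M X closure_of S"
proof -
  have S_cl: "S \<subseteq> weak_top M X closure_of S" using SX topspace_weak_top by (simp add: closure_of_subset)
  have add_S: "(\<lambda>\<omega>. 1 * s \<omega> + t \<omega>) \<in> weak_top M X closure_of S"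
    if "s \<in> weak_top M X closure_of S" "t \<in> S" for s t
    by (rule weak_closure_affine[OF SX _ that(1)]) (use that SX S S_cl in auto)
  have "(\<lambda>\<omega>. 1 * x \<omega> + y \<omega>) \<in> weak_top M X closure_of S"
  proof (rule weak_closure_affine[OF SX _ x])
    show "y \<in> X" using y weak_closure_subset_X by blast
    show "(\<lambda>\<omega>. 1 * s \<omega> + y \<omega>) \<in> weak_top M X closure_of S" if "s \<in> S" for s
      using add_S[OF y that] by (simp add: add.commute)
  qed
  then show ?thesis by simp
qed

lemma weak_closure_dominated_LIMSEQ:
  assumes SX: "S \<subseteq> X" and gs: "\<And>n. gs n \<in> weak_top M X closure_of S"
    and g: "g \<in> borel_measurable M" and u: "u \<in> X"
    and lim: "AE \<omega> in M. (\<lambda>n. gs n \<omega>) \<longlonglongrightarrow> g \<omega>" and dom: "\<And>n. AE \<omega> in M. \<bar>gs n \<omega>\<bar> \<le> \<bar>u \<omega>\<bar>"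
  shows "g \<in> weak_top M X closure_of S"
proof -
  have gsX: "gs n \<in> X" for n using gs weak_closure_subset_X by blast
  have gX: "g \<in> X" by (rule X_dominated[OF g u AE_abs_le_of_LIMSEQ[OF lim dom]])
  have "g \<in> weak_top M X closure_of (weak_top M X closure_of S)"
    by (rule in_weak_closure_of_LIMSEQ[OF gX gs weak_closure_subset_X])
       (rule order_dual_LIMSEQ_dominated[OF _ gsX gX u lim dom])
  then show ?thesis by simp
qed

section \<open>Closure in probability\<close>

text \<open>Closure in \<open>X\<close> for the Ky Fan metric of convergence in probability.\<close>

definition prob_closure :: "('a \<Rightarrow> real) set \<Rightarrow> ('a \<Rightarrow> real) set" where
  "prob_closure S = {g \<in> X. \<forall>e>0. \<exists>q\<in>S. measure M {\<omega> \<in> space M. e < \<bar>g \<omega> - q \<omega>\<bar>} < e}"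

lemma prob_closure_subset_X: "prob_closure S \<subseteq> X"
  unfolding prob_closure_def by auto

lemma prob_closure_measurable: "g \<in> prob_closure S \<Longrightarrow> g \<in> borel_measurable M"
  by (rule X_measurable) (simp add: prob_closure_def)

lemma subset_prob_closure:
  assumes "S \<subseteq> X" shows "S \<subseteq> prob_closure S"
proof
  fix s assume "s \<in> S"
  with assms show "s \<in> prob_closure S"
    unfolding prob_closure_def by (intro CollectI conjI allI impI bexI[of _ s]) auto
qed

lemma prob_closure_approx:
  "g \<in> prob_closure S \<Longrightarrow> 0 < e \<Longrightarrow> \<exists>q\<in>S. measure M {\<omega> \<in> space M. e < \<bar>g \<omega> - q \<omega>\<bar>} < e"
  unfolding prob_closure_def by blast

lemma prob_closure_add:
  assumes SX: "S \<subseteq> X" and S: "\<And>s t. s \<in> S \<Longrightarrow> t \<in> S \<Longrightarrow> (\<lambda>\<omega>. s \<omega> + t \<omega>) \<in> S"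
    and x: "x \<in> prob_closure S" and y: "y \<in> prob_closure S"
  shows "(\<lambda>\<omega>. x \<omega> + y \<omega>) \<in> prob_closure S"
  unfolding prob_closure_def
proof (intro CollectI conjI allI impI)
  show "(\<lambda>\<omega>. x \<omega> + y \<omega>) \<in> X" using x y X_add prob_closure_subset_X by blast
  fix e :: real assume "0 < e"
  then obtain p q where p: "p \<in> S" "measure M {\<omega> \<in> space M. e/2 < \<bar>x \<omega> - p \<omega>\<bar>} < e/2"
    and q: "q \<in> S" "measure M {\<omega> \<in> space M. e/2 < \<bar>y \<omega> - q \<omega>\<bar>} < e/2"
    using prob_closure_approx[OF x, of "e/2"] prob_closure_approx[OF y, of "e/2"] by auto
  have [measurable]: "x \<in> borel_measurable M" "y \<in> borel_measurable M"
    "p \<in> borel_measurable M" "q \<in> borel_measurable M"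
    using prob_closure_measurable[OF x] prob_closure_measurable[OF y]
      X_measurable[OF subsetD[OF SX p(1)]] X_measurable[OF subsetD[OF SX q(1)]] by simp_all
  have "measure M {\<omega> \<in> space M. e < \<bar>(x \<omega> + y \<omega>) - (p \<omega> + q \<omega>)\<bar>}
      \<le> measure M {\<omega> \<in> space M. e/2 < \<bar>(x \<omega> + y \<omega>) - (p \<omega> + y \<omega>)\<bar>}
        + measure M {\<omega> \<in> space M. e/2 < \<bar>(p \<omega> + y \<omega>) - (p \<omega> + q \<omega>)\<bar>}"
    by (rule measure_deviation_triangle) measurable
  also have "\<dots> < e" using p(2) q(2) by simp
  finally show "\<exists>r\<in>S. measure M {\<omega> \<in> space M. e < \<bar>x \<omega> + y \<omega> - r \<omega>\<bar>} < e"
    using S[OF p(1) q(1)] by auto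
qed

lemma prob_closure_scale:
  assumes SX: "S \<subseteq> X" and S: "\<And>s. s \<in> S \<Longrightarrow> (\<lambda>\<omega>. c * s \<omega>) \<in> S" and x: "x \<in> prob_closure S"
  shows "(\<lambda>\<omega>. c * x \<omega>) \<in> prob_closure S"
  unfolding prob_closure_def
proof (intro CollectI conjI allI impI)
  show "(\<lambda>\<omega>. c * x \<omega>) \<in> X" using x X_scale prob_closure_subset_X by blast
  fix e :: real assume e: "0 < e"
  define e' where "e' = e / (\<bar>c\<bar> + 1)"
  have e': "0 < e'" "e' \<le> e" using e unfolding e'_def by (auto simp: field_simps)
  obtain p where p: "p \<in> S" "measure M {\<omega> \<in> space M. e' < \<bar>x \<omega> - p \<omega>\<bar>} < e'"
    using prob_closure_approx[OF x e'(1)] by blast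
  have [measurable]: "x \<in> borel_measurable M" "p \<in> borel_measurable M"
    using prob_closure_measurable[OF x] X_measurable[OF subsetD[OF SX p(1)]] by simp_all
  have "measure M {\<omega> \<in> space M. e < \<bar>c * x \<omega> - c * p \<omega>\<bar>} \<le> measure M {\<omega> \<in> space M. e' < \<bar>x \<omega> - p \<omega>\<bar>}"
  proof (rule finite_measure_mono)
    show "{\<omega> \<in> space M. e < \<bar>c * x \<omega> - c * p \<omega>\<bar>} \<subseteq> {\<omega> \<in> space M. e' < \<bar>x \<omega> - p \<omega>\<bar>}"
    proof safe
      fix \<omega> assume "e < \<bar>c * x \<omega> - c * p \<omega>\<bar>"
      also have "\<dots> = \<bar>c\<bar> * \<bar>x \<omega> - p \<omega>\<bar>" by (simp add: abs_mult[symmetric] right_diff_distrib)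
      also have "\<dots> \<le> (\<bar>c\<bar> + 1) * \<bar>x \<omega> - p \<omega>\<bar>" by (intro mult_right_mono) auto
      finally have "e < \<bar>x \<omega> - p \<omega>\<bar> * (\<bar>c\<bar> + 1)" by (simp add: mult.commute)
      moreover have "0 < \<bar>c\<bar> + 1" by simp
      ultimately show "e' < \<bar>x \<omega> - p \<omega>\<bar>" unfolding e'_def by (simp add: pos_divide_less_eq)
    qed
  qed measurable
  also have "\<dots> < e" using p(2) e' by linarith
  finally show "\<exists>q\<in>S. measure M {\<omega> \<in> space M. e < \<bar>c * x \<omega> - q \<omega>\<bar>} < e"
    using S[OF p(1)] by auto
qed

lemma prob_closure_dominated_LIMSEQ:
  assumes SX: "S \<subseteq> X" and gs: "\<And>n. gs n \<in> prob_closure S"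
    and g [measurable]: "g \<in> borel_measurable M" and u: "u \<in> X"
    and lim: "AE \<omega> in M. (\<lambda>n. gs n \<omega>) \<longlonglongrightarrow> g \<omega>" and dom: "\<And>n. AE \<omega> in M. \<bar>gs n \<omega>\<bar> \<le> \<bar>u \<omega>\<bar>"
  shows "g \<in> prob_closure S"
  unfolding prob_closure_def
proof (intro CollectI conjI allI impI)
  show "g \<in> X" by (rule X_dominated[OF g u AE_abs_le_of_LIMSEQ[OF lim dom]])
  fix e :: real assume e: "0 < e"
  have [measurable]: "gs n \<in> borel_measurable M" for n
    using prob_closure_measurable[OF gs] .
  have "(\<lambda>n. measure M {\<omega> \<in> space M. e/2 < \<bar>gs n \<omega> - g \<omega>\<bar>}) \<longlonglongrightarrow> 0"
    by (rule measure_deviation_tendsto_0_of_AE_LIMSEQ[OF _ g lim]) (use e in auto)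
  from LIMSEQ_D[OF this, of "e/2"] e obtain n where
    "norm (measure M {\<omega> \<in> space M. e/2 < \<bar>gs n \<omega> - g \<omega>\<bar>} - 0) < e/2"
    by auto
  then have n: "measure M {\<omega> \<in> space M. e/2 < \<bar>gs n \<omega> - g \<omega>\<bar>} < e/2" by simp
  obtain p where p: "p \<in> S" "measure M {\<omega> \<in> space M. e/2 < \<bar>gs n \<omega> - p \<omega>\<bar>} < e/2"
    using prob_closure_approx[OF gs[of n], of "e/2"] e by auto
  have [measurable]: "p \<in> borel_measurable M" using X_measurable[OF subsetD[OF SX p(1)]] .
  have "measure M {\<omega> \<in> space M. e < \<bar>g \<omega> - p \<omega>\<bar>}
     \<le> measure M {\<omega> \<in> space M. e/2 < \<bar>g \<omega> - gs n \<omega>\<bar>} + measure M {\<omega> \<in> space M. e/2 < \<bar>gs n \<omega> - p \<omega>\<bar>}"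
    by (rule measure_deviation_triangle) measurable
  also have "\<dots> < e" using n p(2) by (simp add: abs_minus_commute)
  finally show "\<exists>q\<in>S. measure M {\<omega> \<in> space M. e < \<bar>g \<omega> - q \<omega>\<bar>} < e" using p(1) by blast
qed

lemma AE_LIMSEQ_of_prob_closure:
  assumes SX: "S \<subseteq> X" and g: "g \<in> prob_closure S"
  shows "\<exists>gs. (\<forall>n. gs n \<in> S) \<and> (AE \<omega> in M. (\<lambda>n. gs n \<omega>) \<longlonglongrightarrow> g \<omega>)"
proof -
  have "\<forall>n. \<exists>q\<in>S. measure M {\<omega> \<in> space M. (1/2)^n < \<bar>g \<omega> - q \<omega>\<bar>} < (1/2)^n"
    using prob_closure_approx[OF g] by simp
  then obtain gs where gs: "\<And>n. gs n \<in> S"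
    "\<And>n. measure M {\<omega> \<in> space M. (1/2)^n < \<bar>g \<omega> - gs n \<omega>\<bar>} < (1/2)^n"
    by metis
  have "AE \<omega> in M. (\<lambda>n. gs n \<omega>) \<longlonglongrightarrow> g \<omega>"
    by (rule AE_LIMSEQ_of_geometric_measure_deviation[OF _ _ gs(2)])
       (use X_measurable[OF subsetD[OF SX gs(1)]] prob_closure_measurable[OF g] in auto)
  with gs(1) show ?thesis by blast
qed

end

section \<open>Classes closed under dominated a.e. limits\<close>

locale dominated_limit_class = L0_ideal_space +
  fixes f :: "'a \<Rightarrow> real" and W :: "('a \<Rightarrow> real) set"
  assumes f_in_X: "f \<in> X" and W_subset_X: "W \<subseteq> X" and O_span_subset_W: "O_span f \<subseteq> W"
    and W_add: "x \<in> W \<Longrightarrow> y \<in> W \<Longrightarrow> (\<lambda>\<omega>. x \<omega> + y \<omega>) \<in> W"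
    and W_scale: "x \<in> W \<Longrightarrow> (\<lambda>\<omega>. c * x \<omega>) \<in> W"
    and W_dominated_LIMSEQ: "(\<And>n. gs n \<in> W) \<Longrightarrow> g \<in> borel_measurable M \<Longrightarrow> u \<in> X \<Longrightarrow>
      (AE \<omega> in M. (\<lambda>n. gs n \<omega>) \<longlonglongrightarrow> g \<omega>) \<Longrightarrow> (\<And>n. AE \<omega> in M. \<bar>gs n \<omega>\<bar> \<le> \<bar>u \<omega>\<bar>) \<Longrightarrow> g \<in> W"
begin

lemma f_measurable: "f \<in> borel_measurable M"
  using X_measurable[OF f_in_X] .

lemma W_const: "(\<lambda>_. c) \<in> W"
  using O_span_const O_span_subset_W by blast

lemma W_AE_cong:
  assumes x: "x \<in> W" and y: "y \<in> borel_measurable M" and ae: "AE \<omega> in M. x \<omega> = y \<omega>"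
  shows "y \<in> W"
proof (rule W_dominated_LIMSEQ[of "\<lambda>_. x" y x])
  show "x \<in> X" using x W_subset_X by blast
  show "AE \<omega> in M. (\<lambda>n. x \<omega>) \<longlonglongrightarrow> y \<omega>" using ae by eventually_elim simp
qed (use x y in auto)

lemma W_sum: "finite I \<Longrightarrow> (\<And>i. i \<in> I \<Longrightarrow> h i \<in> W) \<Longrightarrow> (\<lambda>\<omega>. \<Sum>i\<in>I. c i * h i \<omega>) \<in> W"
proof (induction I rule: finite_induct)
  case empty then show ?case using W_const[of 0] by simp
next
  case (insert i I)
  then show ?case using W_add[OF W_scale[of "h i" "c i"], of "\<lambda>\<omega>. \<Sum>i\<in>I. c i * h i \<omega>"] by simp
qed

lemma indicator_halfline_in_W: "indicator (f -` {..a} \<inter> space M) \<in> W"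
proof (rule W_dominated_LIMSEQ[of "\<lambda>n \<omega>. ramp a n (f \<omega>)" _ "\<lambda>_. 1"])
  show "(\<lambda>\<omega>. ramp a n (f \<omega>)) \<in> W" for n using ramp_in_O_span O_span_subset_W by blast
  show "indicator (f -` {..a} \<inter> space M) \<in> borel_measurable M"
    using measurable_sets[OF f_measurable] by (intro borel_measurable_indicator) auto
  show "AE \<omega> in M. (\<lambda>n. ramp a n (f \<omega>)) \<longlonglongrightarrow> indicator (f -` {..a} \<inter> space M) \<omega>"
  proof (rule AE_I2)
    fix \<omega> show "(\<lambda>n. ramp a n (f \<omega>)) \<longlonglongrightarrow> indicator (f -` {..a} \<inter> space M) \<omega>" if "\<omega> \<in> space M"
      using LIMSEQ_ramp[of a "f \<omega>"] that by (cases "f \<omega> \<le> a") (simp_all add: indicator_def)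
  qed
  show "AE \<omega> in M. \<bar>ramp a n (f \<omega>)\<bar> \<le> \<bar>1\<bar>" for n
    by (rule AE_I2) (use ramp_bounds[of a n "f _"] in simp)
qed (rule X_const)

lemma indicator_sigma_of_in_W:
  assumes "A \<in> sets (sigma_of M f)" shows "indicator A \<in> W"
proof -
  let ?H = "{f -` {..a} \<inter> space M | a. True} \<union> null_sets M"
  have H_sets: "?H \<subseteq> sets M" by (auto intro!: measurable_sets[OF f_measurable])
  then have H: "?H \<subseteq> Pow (space M)" using sets.sets_into_space by blast
  have sets_H: "sigma_sets (space M) ?H \<subseteq> sets M" by (rule sets.sigma_sets_subset[OF H_sets])
  have "A \<in> sigma_sets (space M) ?H"
    using sets_sigma_of_subset_halflines[OF f_measurable] assms by blast
  with Int_stable_halflines[OF f_measurable] H show ?thesis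
  proof (induction rule: sigma_sets_induct_disjoint)
    case (basic A)
    then consider a where "A = f -` {..a} \<inter> space M" | "A \<in> null_sets M" by blast
    then show ?case
    proof cases
      case 1 then show ?thesis using indicator_halfline_in_W by simp
    next
      case 2
      show ?thesis
        by (rule W_AE_cong[OF W_const[of 0]]) (use 2 AE_not_in[OF 2] in \<open>auto elim: eventually_mono\<close>)
    qed
  next
    case empty then show ?case using W_const[of 0] by simp
  next
    case (compl A)
    have "(\<lambda>\<omega>. 1 + (-1) * indicator A \<omega>) \<in> W" using W_add[OF W_const W_scale[OF compl(2)]] .
    then show ?case
      by (rule W_AE_cong) (use compl(1) sets_H in \<open>auto intro!: AE_I2 simp: indicator_def\<close>)
  next
    case (union A)
    define s where "s n \<omega> = (\<Sum>i<n. 1 * (indicator (A i) \<omega> :: real))" for n \<omega>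
    have s_eq: "s n \<omega> = indicator (\<Union>i<n. A i) \<omega>" for n \<omega>
      unfolding s_def mult_1 by (rule sum_indicator_disjoint_family[OF union(1)])
    show ?case
    proof (rule W_dominated_LIMSEQ[OF _ _ X_const[of 1]])
      show "s n \<in> W" for n unfolding s_def by (rule W_sum) (use union in auto)
      show "indicator (\<Union>i. A i) \<in> borel_measurable M"
        using union(2) sets_H by (intro borel_measurable_indicator sets.countable_UN) auto
      show "AE \<omega> in M. (\<lambda>n. s n \<omega>) \<longlonglongrightarrow> indicator (\<Union>i. A i) \<omega>"
        by (rule AE_I2) (simp add: s_eq LIMSEQ_indicator_UN)
      show "AE \<omega> in M. \<bar>s n \<omega>\<bar> \<le> \<bar>1\<bar>" for n
        by (rule AE_I2) (simp add: s_eq indicator_def)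
    qed
  qed
qed

lemma sigma_of_measurable_in_W:
  assumes gX: "g \<in> X" and gf: "g \<in> borel_measurable (sigma_of M f)"
  shows "g \<in> W"
proof -
  obtain F where F: "\<And>i. simple_function (sigma_of M f) (F i)"
    "\<And>\<omega>. \<omega> \<in> space (sigma_of M f) \<Longrightarrow> (\<lambda>i. F i \<omega>) \<longlonglongrightarrow> g \<omega>"
    "\<And>i \<omega>. \<omega> \<in> space (sigma_of M f) \<Longrightarrow> dist (F i \<omega>) 0 \<le> 2 * dist (g \<omega>) 0"
    using borel_measurable_implies_sequence_metric[OF gf, of 0] by blast
  note space = space_sigma_of[OF f_measurable]
  have "F i \<in> W" for i
  proof (rule W_AE_cong)
    let ?S = "F i ` space M"
    have fin: "finite ?S" and sets: "\<And>y. y \<in> ?S \<Longrightarrow> F i -` {y} \<inter> space M \<in> sets (sigma_of M f)"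
      using F(1)[of i] unfolding simple_function_def space by auto
    show "(\<lambda>\<omega>. \<Sum>y\<in>?S. y * indicator (F i -` {y} \<inter> space M) \<omega>) \<in> W"
      by (rule W_sum[OF fin]) (use sets indicator_sigma_of_in_W in auto)
    show "F i \<in> borel_measurable M"
      by (rule measurable_from_subalg[OF subalgebra_sigma_of[OF f_measurable refl refl]
            borel_measurable_simple_function[OF F(1)]])
    show "AE \<omega> in M. (\<Sum>y\<in>?S. y * indicator (F i -` {y} \<inter> space M) \<omega>) = F i \<omega>"
    proof (rule AE_I2)
      fix \<omega> assume "\<omega> \<in> space M"
      from simple_function_eq_sum_indicator[OF F(1), unfolded space, OF this]
      show "(\<Sum>y\<in>?S. y * indicator (F i -` {y} \<inter> space M) \<omega>) = F i \<omega>" by (rule sym)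
    qed
  qed
  then show ?thesis
  proof (rule W_dominated_LIMSEQ[OF _ X_measurable[OF gX] X_scale[OF X_abs[OF gX], of 2]])
    show "AE \<omega> in M. (\<lambda>n. F n \<omega>) \<longlonglongrightarrow> g \<omega>" by (rule AE_I2) (use F(2) space in auto)
    show "AE \<omega> in M. \<bar>F n \<omega>\<bar> \<le> \<bar>2 * \<bar>g \<omega>\<bar>\<bar>" for n
      by (rule AE_I2) (use F(3)[of _ n] space in auto)
  qed
qed

end

context L0_ideal_space begin

lemma dominated_limit_class_weak_closure:
  assumes f: "f \<in> X" shows "dominated_limit_class M X f (weak_top M X closure_of O_span f)"
proof (intro dominated_limit_class.intro[OF L0_ideal_space_axioms] dominated_limit_class_axioms.intro)
  have O: "O_span f \<subseteq> X" by (rule O_span_subset_X[OF f])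
  show "O_span f \<subseteq> weak_top M X closure_of O_span f"
    using O topspace_weak_top by (simp add: closure_of_subset)
  show "(\<lambda>\<omega>. x \<omega> + y \<omega>) \<in> weak_top M X closure_of O_span f"
    if "x \<in> weak_top M X closure_of O_span f" "y \<in> weak_top M X closure_of O_span f" for x y
    using weak_closure_add[OF O O_span_add that] .
  show "(\<lambda>\<omega>. c * x \<omega>) \<in> weak_top M X closure_of O_span f"
    if "x \<in> weak_top M X closure_of O_span f" for x c
    using weak_closure_scale[OF O O_span_scale that] .
  show "g \<in> weak_top M X closure_of O_span f"
    if "\<And>n. gs n \<in> weak_top M X closure_of O_span f" "g \<in> borel_measurable M" "u \<in> X"
      "AE \<omega> in M. (\<lambda>n. gs n \<omega>) \<longlonglongrightarrow> g \<omega>" "\<And>n. AE \<omega> in M. \<bar>gs n \<omega>\<bar> \<le> \<bar>u \<omega>\<bar>" for gs g u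
    using weak_closure_dominated_LIMSEQ[OF O that] .
qed (use f weak_closure_subset_X in auto)

lemma dominated_limit_class_prob_closure:
  assumes f: "f \<in> X" shows "dominated_limit_class M X f (prob_closure (O_span f))"
proof (intro dominated_limit_class.intro[OF L0_ideal_space_axioms] dominated_limit_class_axioms.intro)
  have O: "O_span f \<subseteq> X" by (rule O_span_subset_X[OF f])
  show "O_span f \<subseteq> prob_closure (O_span f)" by (rule subset_prob_closure[OF O])
  show "(\<lambda>\<omega>. x \<omega> + y \<omega>) \<in> prob_closure (O_span f)"
    if "x \<in> prob_closure (O_span f)" "y \<in> prob_closure (O_span f)" for x y
    using prob_closure_add[OF O O_span_add that] .
  show "(\<lambda>\<omega>. c * x \<omega>) \<in> prob_closure (O_span f)" if "x \<in> prob_closure (O_span f)" for x c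
    using prob_closure_scale[OF O O_span_scale that] .
  show "g \<in> prob_closure (O_span f)"
    if "\<And>n. gs n \<in> prob_closure (O_span f)" "g \<in> borel_measurable M" "u \<in> X"
      "AE \<omega> in M. (\<lambda>n. gs n \<omega>) \<longlonglongrightarrow> g \<omega>" "\<And>n. AE \<omega> in M. \<bar>gs n \<omega>\<bar> \<le> \<bar>u \<omega>\<bar>" for gs g u
    using prob_closure_dominated_LIMSEQ[OF O that] .
qed (use f prob_closure_subset_X in auto)

lemma sigma_of_measurable_iff_AE_LIMSEQ_O_span:
  assumes f: "f \<in> X" and g: "g \<in> X"
  shows "g \<in> borel_measurable (sigma_of M f) \<longleftrightarrow>
    (\<exists>gs. (\<forall>n. gs n \<in> O_span f) \<and> (AE \<omega> in M. (\<lambda>n. gs n \<omega>) \<longlonglongrightarrow> g \<omega>))"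
proof
  interpret prob: dominated_limit_class M X f "prob_closure (O_span f)"
    by (rule dominated_limit_class_prob_closure[OF f])
  assume "g \<in> borel_measurable (sigma_of M f)"
  then have "g \<in> prob_closure (O_span f)" by (rule prob.sigma_of_measurable_in_W[OF g])
  then show "\<exists>gs. (\<forall>n. gs n \<in> O_span f) \<and> (AE \<omega> in M. (\<lambda>n. gs n \<omega>) \<longlonglongrightarrow> g \<omega>)"
    by (rule AE_LIMSEQ_of_prob_closure[OF O_span_subset_X[OF f]])
next
  have f_meas: "f \<in> borel_measurable M" by (rule X_measurable[OF f])
  assume "\<exists>gs. (\<forall>n. gs n \<in> O_span f) \<and> (AE \<omega> in M. (\<lambda>n. gs n \<omega>) \<longlonglongrightarrow> g \<omega>)"
  then obtain gs where gs: "\<And>n. gs n \<in> O_span f" "AE \<omega> in M. (\<lambda>n. gs n \<omega>) \<longlonglongrightarrow> g \<omega>"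
    by blast
  show "g \<in> borel_measurable (sigma_of M f)"
    by (rule sigma_of_measurable_AE_LIMSEQ[OF f_meas _ X_measurable[OF g] gs(2)])
       (rule O_span_measurable[OF measurable_sigma_of[OF f_meas] gs(1)])
qed

end

section \<open>The measure represented by a strictly positive functional\<close>

locale L0_ideal_functional = L0_ideal_space +
  fixes \<phi> :: "('a \<Rightarrow> real) \<Rightarrow> real"
  assumes order_dual_\<phi>: "\<phi> \<in> order_dual_n M X" and strictly_positive_\<phi>: "strictly_positive M X \<phi>"
begin

lemma lin_functional_\<phi>: "lin_functional M X \<phi>"
  using order_dual_\<phi> unfolding order_dual_n_def by auto

lemma \<phi>_nonneg: assumes "x \<in> X" "AE \<omega> in M. 0 \<le> x \<omega>" shows "0 \<le> \<phi> x"
proof (cases "AE \<omega> in M. x \<omega> = 0")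
  case True
  then have "\<phi> x = \<phi> (\<lambda>_. 0)" using lin_functional_AE_cong[OF lin_functional_\<phi> assms(1) X_const] by simp
  then show ?thesis using lin_functional_zero[OF lin_functional_\<phi>] by simp
next
  case False
  then show ?thesis using strictly_positive_\<phi> assms unfolding strictly_positive_def by force
qed

lemma \<phi>_indicator_eq_0_iff:
  assumes A: "A \<in> sets M" shows "\<phi> (indicator A) = 0 \<longleftrightarrow> A \<in> null_sets M"
proof -
  have "(AE \<omega> in M. (indicator A \<omega> :: real) = 0) \<longleftrightarrow> A \<in> null_sets M"
    using AE_iff_null_sets[OF A] by (simp add: indicator_eq_0_iff)
  moreover have "\<phi> (indicator A) = 0" if "AE \<omega> in M. (indicator A \<omega> :: real) = 0"
    using lin_functional_AE_cong[OF lin_functional_\<phi> X_indicator[OF A] X_const that]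
      lin_functional_zero[OF lin_functional_\<phi>] by simp
  moreover have "0 < \<phi> (indicator A)" if "\<not> (AE \<omega> in M. (indicator A \<omega> :: real) = 0)"
    using strictly_positive_\<phi> X_indicator[OF A] that unfolding strictly_positive_def by auto
  ultimately show ?thesis by force
qed

definition \<nu> :: "'a measure" where
  "\<nu> = measure_of (space M) (sets M) (\<lambda>A. ennreal (\<phi> (indicator A)))"

lemma countably_additive_\<phi>_indicator: "countably_additive (sets M) (\<lambda>A. ennreal (\<phi> (indicator A)))"
  unfolding countably_additive_def
proof (intro allI impI)
  fix A :: "nat \<Rightarrow> 'a set" assume A: "range A \<subseteq> sets M" and disj: "disjoint_family A"
    and U: "(\<Union>i. A i) \<in> sets M"
  define s where "s n \<omega> = (\<Sum>i<n. 1 * (indicator (A i) \<omega> :: real))" for n \<omega>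
  have s_eq: "s n \<omega> = indicator (\<Union>i<n. A i) \<omega>" for n \<omega>
    unfolding s_def mult_1 by (rule sum_indicator_disjoint_family[OF disj])
  have AX: "indicator (A i) \<in> X" for i using A by (intro X_indicator) auto
  have "(\<lambda>n. \<phi> (s n)) \<longlonglongrightarrow> \<phi> (indicator (\<Union>i. A i))"
  proof (rule order_dual_LIMSEQ_dominated[OF order_dual_\<phi> _ X_indicator[OF U] X_const[of 1]])
    show "s n \<in> X" for n unfolding s_def by (rule X_sum) (use AX in auto)
    show "AE \<omega> in M. (\<lambda>n. s n \<omega>) \<longlonglongrightarrow> indicator (\<Union>i. A i) \<omega>"
      by (rule AE_I2) (simp add: s_eq LIMSEQ_indicator_UN)
    show "AE \<omega> in M. \<bar>s n \<omega>\<bar> \<le> \<bar>1\<bar>" for n by (rule AE_I2) (simp add: s_eq indicator_def)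
  qed
  moreover have "\<phi> (s n) = (\<Sum>i<n. 1 * \<phi> (indicator (A i)))" for n
    unfolding s_def by (rule lin_functional_sum[OF lin_functional_\<phi> finite_lessThan]) (rule AX)
  ultimately have sums: "(\<lambda>i. \<phi> (indicator (A i))) sums \<phi> (indicator (\<Union>i. A i))"
    unfolding sums_def by simp
  have "0 \<le> \<phi> (indicator (A i))" for i by (rule \<phi>_nonneg[OF AX]) (rule AE_I2, simp)
  then have "(\<Sum>i. ennreal (\<phi> (indicator (A i)))) = ennreal (\<Sum>i. \<phi> (indicator (A i)))"
    by (rule suminf_ennreal2[OF _ sums_summable[OF sums]])
  then show "(\<Sum>i. ennreal (\<phi> (indicator (A i)))) = ennreal (\<phi> (indicator (\<Union>i. A i)))"
    by (simp only: sums_unique[OF sums, symmetric])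
qed

lemma sets_\<nu> [simp, measurable_cong]: "sets \<nu> = sets M"
  unfolding \<nu>_def by (rule sigma_algebra.sets_measure_of_eq[OF sets.sigma_algebra_axioms])

lemma space_\<nu> [simp]: "space \<nu> = space M"
  unfolding \<nu>_def by (rule sigma_algebra.space_measure_of_eq[OF sets.sigma_algebra_axioms])

lemma emeasure_\<nu>: "A \<in> sets M \<Longrightarrow> emeasure \<nu> A = ennreal (\<phi> (indicator A))"
  unfolding \<nu>_def
proof (rule emeasure_measure_of_sigma[OF sets.sigma_algebra_axioms _ countably_additive_\<phi>_indicator])
  have empty: "indicator {} = (\<lambda>_. 0::real)" by (rule ext) simp
  show "positive (sets M) (\<lambda>A. ennreal (\<phi> (indicator A)))"
    unfolding positive_def empty by (simp add: lin_functional_zero[OF lin_functional_\<phi>])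
qed

lemma measure_\<nu>: "A \<in> sets M \<Longrightarrow> measure \<nu> A = \<phi> (indicator A)"
  unfolding measure_def using emeasure_\<nu> \<phi>_nonneg[OF X_indicator] by simp

lemma finite_measure_\<nu>: "finite_measure \<nu>"
  by (rule finite_measureI) (simp add: emeasure_\<nu>)

lemma null_sets_\<nu>: "null_sets \<nu> = null_sets M"
proof -
  have iff: "A \<in> null_sets \<nu> \<longleftrightarrow> A \<in> null_sets M" if A: "A \<in> sets M" for A
    using emeasure_\<nu>[OF A] \<phi>_nonneg[OF X_indicator[OF A]] \<phi>_indicator_eq_0_iff[OF A] A
    by (auto simp: null_sets_def)
  show ?thesis
  proof (intro set_eqI iffI)
    show "A \<in> null_sets M" if "A \<in> null_sets \<nu>" for A using iff null_setsD2[OF that] that by simp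
    show "A \<in> null_sets \<nu>" if "A \<in> null_sets M" for A using iff null_setsD2[OF that] that by simp
  qed
qed

lemma AE_\<nu>_iff: "(AE \<omega> in \<nu>. P \<omega>) \<longleftrightarrow> (AE \<omega> in M. P \<omega>)"
  unfolding ae_filter_def null_sets_\<nu> space_\<nu> ..

lemma measurable_\<nu>: "borel_measurable \<nu> = borel_measurable M"
  by (rule measurable_cong_sets) auto

lemma
  assumes s: "simple_function M s"
  shows X_simple_function: "s \<in> X" and integral_\<nu>_simple_function: "integral\<^sup>L \<nu> s = \<phi> s"
proof -
  interpret \<nu>: finite_measure \<nu> by (rule finite_measure_\<nu>)
  let ?S = "s ` space M" and ?A = "\<lambda>y. s -` {y} \<inter> space M"
  have fin: "finite ?S" using s unfolding simple_function_def by auto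
  have sets: "?A y \<in> sets M" for y
    using simple_functionD(2)[OF s, of "{y}"] by simp
  let ?t = "\<lambda>\<omega>. \<Sum>y\<in>?S. y * indicator (?A y) \<omega>"
  have eq: "s \<omega> = ?t \<omega>" if "\<omega> \<in> space M" for \<omega> by (rule simple_function_eq_sum_indicator[OF s that])
  have tX: "?t \<in> X" by (rule X_sum[OF fin]) (use sets X_indicator in auto)
  show sX: "s \<in> X"
    by (rule X_dominated[OF borel_measurable_simple_function[OF s] tX]) (rule AE_I2, simp only: eq order_refl)
  have "\<phi> s = \<phi> ?t"
    by (rule lin_functional_AE_cong[OF lin_functional_\<phi> sX tX]) (rule AE_I2, rule eq)
  also have "\<dots> = (\<Sum>y\<in>?S. y * \<phi> (indicator (?A y)))"
    by (rule lin_functional_sum[OF lin_functional_\<phi> fin]) (use sets X_indicator in auto)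
  also have "\<dots> = (\<Sum>y\<in>?S. integral\<^sup>L \<nu> (\<lambda>\<omega>. y * indicator (?A y) \<omega>))"
    using sets by (intro sum.cong) (simp_all add: measure_\<nu>)
  also have "\<dots> = integral\<^sup>L \<nu> ?t"
    using sets by (intro Bochner_Integration.integral_sum[symmetric] integrable_mult_right
        integrable_real_indicator) (auto simp: emeasure_\<nu>)
  also have "\<dots> = integral\<^sup>L \<nu> s"
    by (rule Bochner_Integration.integral_cong[OF refl]) (simp only: space_\<nu> eq)
  finally show "integral\<^sup>L \<nu> s = \<phi> s" ..
qed

lemma integral_\<nu>_bounded:
  assumes b [measurable]: "b \<in> borel_measurable M" and C: "\<And>\<omega>. \<bar>b \<omega>\<bar> \<le> C"
  shows "integral\<^sup>L \<nu> b = \<phi> b"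
proof -
  interpret \<nu>: finite_measure \<nu> by (rule finite_measure_\<nu>)
  obtain F where F: "\<And>i. simple_function M (F i)" "\<And>\<omega>. \<omega> \<in> space M \<Longrightarrow> (\<lambda>i. F i \<omega>) \<longlonglongrightarrow> b \<omega>"
    "\<And>i \<omega>. \<omega> \<in> space M \<Longrightarrow> dist (F i \<omega>) 0 \<le> 2 * dist (b \<omega>) 0"
    using borel_measurable_implies_sequence_metric[OF b, of 0] by blast
  have F_bound: "\<bar>F i \<omega>\<bar> \<le> 2 * C" if "\<omega> \<in> space M" for i \<omega>
    using F(3)[OF that, of i] C[of \<omega>] by simp
  have [measurable]: "F i \<in> borel_measurable M" for i by (rule borel_measurable_simple_function[OF F(1)])
  have "(\<lambda>i. \<phi> (F i)) \<longlonglongrightarrow> \<phi> b"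
  proof (rule order_dual_LIMSEQ_dominated[OF order_dual_\<phi> X_simple_function[OF F(1)]
        X_bounded[OF b C] X_const[of "2 * C"]])
    show "AE \<omega> in M. (\<lambda>n. F n \<omega>) \<longlonglongrightarrow> b \<omega>" by (rule AE_I2) (rule F(2))
    show "AE \<omega> in M. \<bar>F n \<omega>\<bar> \<le> \<bar>2 * C\<bar>" for n
      by (rule AE_I2) (use F_bound in \<open>meson abs_ge_self order_trans\<close>)
  qed
  moreover have "(\<lambda>i. integral\<^sup>L \<nu> (F i)) \<longlonglongrightarrow> integral\<^sup>L \<nu> b"
    by (rule integral_dominated_convergence[where w = "\<lambda>_. 2 * C"])
       (auto intro!: AE_I2 simp: measurable_\<nu> F(2) F_bound)
  ultimately show ?thesis using integral_\<nu>_simple_function[OF F(1)] LIMSEQ_unique by simp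
qed

lemma integrable_\<nu>:
  assumes x: "x \<in> X" shows "integrable \<nu> x"
proof -
  interpret \<nu>: finite_measure \<nu> by (rule finite_measure_\<nu>)
  have [measurable]: "x \<in> borel_measurable M" by (rule X_measurable[OF x])
  define m where "m n \<omega> = min (real n) \<bar>x \<omega>\<bar>" for n \<omega>
  have [measurable]: "m n \<in> borel_measurable M" for n unfolding m_def by measurable
  have m_bound: "\<bar>m n \<omega>\<bar> \<le> real n" for n \<omega> unfolding m_def by auto
  have "integrable \<nu> (\<lambda>\<omega>. \<bar>x \<omega>\<bar>)"
  proof (rule integrable_monotone_convergence[where f = m and x = "\<phi> (\<lambda>\<omega>. \<bar>x \<omega>\<bar>)"])
    show "integrable \<nu> (m i)" for i
      by (rule \<nu>.integrable_const_bound[where B = "real i"]) (auto simp: m_bound measurable_\<nu>)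
    show "AE \<omega> in \<nu>. mono (\<lambda>n. m n \<omega>)"
      by (rule AE_I2) (auto simp: m_def mono_def intro: min.mono)
    show "AE \<omega> in \<nu>. (\<lambda>i. m i \<omega>) \<longlonglongrightarrow> \<bar>x \<omega>\<bar>" unfolding m_def by (simp add: LIMSEQ_min_of_nat)
    have "(\<lambda>n. \<phi> (m n)) \<longlonglongrightarrow> \<phi> (\<lambda>\<omega>. \<bar>x \<omega>\<bar>)"
      by (rule order_dual_LIMSEQ_dominated[OF order_dual_\<phi> X_bounded[OF _ m_bound] X_abs[OF x] x])
         (auto intro!: AE_I2 simp: m_def LIMSEQ_min_of_nat)
    then show "(\<lambda>i. integral\<^sup>L \<nu> (m i)) \<longlonglongrightarrow> \<phi> (\<lambda>\<omega>. \<bar>x \<omega>\<bar>)"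
      by (simp add: integral_\<nu>_bounded[OF _ m_bound])
  qed (simp add: measurable_\<nu>)
  then show ?thesis by (rule integrable_abs_cancel) (simp add: measurable_\<nu>)
qed

lemma integral_\<nu>:
  assumes x: "x \<in> X" shows "integral\<^sup>L \<nu> x = \<phi> x"
proof -
  have [measurable]: "x \<in> borel_measurable M" by (rule X_measurable[OF x])
  define t where "t n \<omega> = max (- real n) (min (real n) (x \<omega>))" for n \<omega>
  have [measurable]: "t n \<in> borel_measurable M" for n unfolding t_def by measurable
  have t_bound: "\<bar>t n \<omega>\<bar> \<le> real n" for n \<omega> unfolding t_def by auto
  have "(\<lambda>n. \<phi> (t n)) \<longlonglongrightarrow> \<phi> x"
    by (rule order_dual_LIMSEQ_dominated[OF order_dual_\<phi> X_bounded[OF _ t_bound] x x])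
       (auto intro!: AE_I2 simp: t_def LIMSEQ_clip_of_nat)
  moreover have "(\<lambda>n. integral\<^sup>L \<nu> (t n)) \<longlonglongrightarrow> integral\<^sup>L \<nu> x"
    by (rule integral_dominated_convergence[where w = "\<lambda>\<omega>. \<bar>x \<omega>\<bar>"])
       (use integrable_abs[OF integrable_\<nu>[OF x]] in \<open>auto intro!: AE_I2 simp: measurable_\<nu> t_def LIMSEQ_clip_of_nat\<close>)
  ultimately show ?thesis
    using integral_\<nu>_bounded[OF _ t_bound] LIMSEQ_unique by simp
qed

lemma
  assumes F: "subalgebra \<nu> F" and [measurable]: "u \<in> borel_measurable M"
    and u: "AE \<omega> in M. \<bar>u \<omega>\<bar> \<le> 1"
  shows order_dual_complement_cond_exp:
      "(\<lambda>x. \<phi> (\<lambda>\<omega>. x \<omega> * (u \<omega> - real_cond_exp \<nu> F u \<omega>))) \<in> order_dual_n M X"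
    and \<phi>_mult_complement_cond_exp: "x \<in> X \<Longrightarrow>
      \<phi> (\<lambda>\<omega>. x \<omega> * (u \<omega> - real_cond_exp \<nu> F u \<omega>)) = (\<integral>\<omega>. (x \<omega> - real_cond_exp \<nu> F x \<omega>) * u \<omega> \<partial>\<nu>)"
proof -
  interpret \<nu>: finite_measure_subalgebra \<nu> F
    by (intro finite_measure_subalgebra.intro finite_measure_\<nu> finite_measure_subalgebra_axioms.intro F)
  have u\<nu>: "AE \<omega> in \<nu>. \<bar>u \<omega>\<bar> \<le> 1" using u by (simp add: AE_\<nu>_iff)
  have [measurable]: "real_cond_exp \<nu> F u \<in> borel_measurable M"
    using borel_measurable_cond_exp2[of \<nu> F u] by (simp add: measurable_\<nu>)
  have "AE \<omega> in \<nu>. \<bar>real_cond_exp \<nu> F u \<omega>\<bar> \<le> 1"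
    by (rule \<nu>.AE_abs_real_cond_exp_le[OF _ u\<nu>]) (simp add: measurable_\<nu>)
  then have "AE \<omega> in \<nu>. \<bar>u \<omega> - real_cond_exp \<nu> F u \<omega>\<bar> \<le> 2" using u\<nu> by eventually_elim arith
  then have w: "AE \<omega> in M. \<bar>u \<omega> - real_cond_exp \<nu> F u \<omega>\<bar> \<le> 2" by (simp add: AE_\<nu>_iff)
  show "(\<lambda>x. \<phi> (\<lambda>\<omega>. x \<omega> * (u \<omega> - real_cond_exp \<nu> F u \<omega>))) \<in> order_dual_n M X"
    by (rule order_dual_mult_bounded[OF order_dual_\<phi> _ w]) simp
  show "\<phi> (\<lambda>\<omega>. x \<omega> * (u \<omega> - real_cond_exp \<nu> F u \<omega>)) = (\<integral>\<omega>. (x \<omega> - real_cond_exp \<nu> F x \<omega>) * u \<omega> \<partial>\<nu>)"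
    if x: "x \<in> X" for x
  proof -
    have "\<phi> (\<lambda>\<omega>. x \<omega> * (u \<omega> - real_cond_exp \<nu> F u \<omega>))
        = (\<integral>\<omega>. x \<omega> * (u \<omega> - real_cond_exp \<nu> F u \<omega>) \<partial>\<nu>)"
      by (rule integral_\<nu>[symmetric]) (rule X_mult_bounded[OF x _ w], simp)
    also have "\<dots> = (\<integral>\<omega>. (x \<omega> - real_cond_exp \<nu> F x \<omega>) * u \<omega> \<partial>\<nu>)"
      by (rule \<nu>.integral_mult_diff_real_cond_exp[OF integrable_\<nu>[OF x] _ u\<nu>]) (simp add: measurable_\<nu>)
    finally show ?thesis .
  qed
qed

lemma order_dual_separates_from_sigma_of:
  assumes f: "f \<in> X" and gX: "g \<in> X" and g_not: "g \<notin> borel_measurable (sigma_of M f)"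
  obtains \<psi> where "\<psi> \<in> order_dual_n M X" "\<psi> g \<noteq> 0"
    "\<forall>q\<in>X. q \<in> borel_measurable (sigma_of M f) \<longrightarrow> \<psi> q = 0"
proof -
  have f_meas: "f \<in> borel_measurable M" by (rule X_measurable[OF f])
  have sub: "subalgebra \<nu> (sigma_of M f)" by (rule subalgebra_sigma_of[OF f_meas]) simp_all
  interpret \<nu>: finite_measure_subalgebra \<nu> "sigma_of M f"
    by (intro finite_measure_subalgebra.intro finite_measure_\<nu> finite_measure_subalgebra_axioms.intro sub)
  let ?E = "real_cond_exp \<nu> (sigma_of M f)"
  have [measurable]: "g \<in> borel_measurable M" by (rule X_measurable[OF gX])
  have Eg_sigma: "?E g \<in> borel_measurable (sigma_of M f)" by (rule borel_measurable_cond_exp)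
  have [measurable]: "?E g \<in> borel_measurable M"
    using borel_measurable_cond_exp2[of \<nu> "sigma_of M f" g] by (simp add: measurable_\<nu>)
  define u where "u \<omega> = sgn (g \<omega> - ?E g \<omega>)" for \<omega>
  have [measurable]: "u \<in> borel_measurable M" unfolding u_def by measurable
  have u_bound: "AE \<omega> in M. \<bar>u \<omega>\<bar> \<le> 1" by (rule AE_I2) (simp add: u_def abs_sgn_eq)
  define \<psi> where "\<psi> x = \<phi> (\<lambda>\<omega>. x \<omega> * (u \<omega> - ?E u \<omega>))" for x
  have \<psi>_eq: "\<psi> x = (\<integral>\<omega>. (x \<omega> - ?E x \<omega>) * u \<omega> \<partial>\<nu>)" if "x \<in> X" for x
    unfolding \<psi>_def by (rule \<phi>_mult_complement_cond_exp[OF sub _ u_bound that]) simp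
  show ?thesis
  proof (rule that)
    show "\<psi> \<in> order_dual_n M X"
      unfolding \<psi>_def by (rule order_dual_complement_cond_exp[OF sub _ u_bound]) simp
    show "\<forall>q\<in>X. q \<in> borel_measurable (sigma_of M f) \<longrightarrow> \<psi> q = 0"
    proof (intro ballI impI)
      fix q assume q: "q \<in> X" "q \<in> borel_measurable (sigma_of M f)"
      have "AE \<omega> in \<nu>. ?E q \<omega> = q \<omega>" by (rule \<nu>.real_cond_exp_F_meas[OF integrable_\<nu>[OF q(1)] q(2)])
      then have "AE \<omega> in \<nu>. (q \<omega> - ?E q \<omega>) * u \<omega> = 0" by eventually_elim simp
      then show "\<psi> q = 0" unfolding \<psi>_eq[OF q(1)] by (rule integral_eq_zero_AE)
    qed
    show "\<psi> g \<noteq> 0"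
    proof
      assume "\<psi> g = 0"
      then have "(\<integral>\<omega>. \<bar>g \<omega> - ?E g \<omega>\<bar> \<partial>\<nu>) = 0" unfolding \<psi>_eq[OF gX] u_def by (simp add: abs_sgn)
      moreover have "integrable \<nu> (\<lambda>\<omega>. \<bar>g \<omega> - ?E g \<omega>\<bar>)"
        using integrable_\<nu>[OF gX] \<nu>.real_cond_exp_int(1)[OF integrable_\<nu>[OF gX]] by auto
      ultimately have "AE \<omega> in \<nu>. \<bar>g \<omega> - ?E g \<omega>\<bar> = 0"
        by (subst (asm) integral_nonneg_eq_0_iff_AE) auto
      then have "AE \<omega> in M. g \<omega> = ?E g \<omega>" by (simp add: AE_\<nu>_iff)
      then have "g \<in> borel_measurable (sigma_of M f)"
        by (rule sigma_of_measurable_AE_cong[OF f_meas Eg_sigma, rotated]) simp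
      with g_not show False ..
    qed
  qed
qed

lemma weak_closure_subset_sigma_of_measurable:
  assumes f: "f \<in> X" and g: "g \<in> weak_top M X closure_of O_span f"
  shows "g \<in> borel_measurable (sigma_of M f)"
proof (rule ccontr)
  have gX: "g \<in> X" using subsetD[OF weak_closure_subset_X g] .
  assume not_sigma: "g \<notin> borel_measurable (sigma_of M f)"
  obtain \<psi> where \<psi>: "\<psi> \<in> order_dual_n M X" "\<psi> g \<noteq> 0"
    and \<psi>_sigma: "\<forall>q\<in>X. q \<in> borel_measurable (sigma_of M f) \<longrightarrow> \<psi> q = 0"
    by (rule order_dual_separates_from_sigma_of[OF f gX not_sigma])
  define U where "U = {x \<in> X. \<psi> x \<in> - {0}}"
  have "openin (weak_top M X) U"
    unfolding U_def by (rule openin_weak_top_functional[OF \<psi>(1)]) (simp add: open_Compl)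
  moreover have "g \<in> U" using gX \<psi>(2) by (simp add: U_def)
  moreover have "\<forall>T. g \<in> T \<and> openin (weak_top M X) T \<longrightarrow> (\<exists>y. y \<in> O_span f \<and> y \<in> T)"
    using g unfolding in_closure_of by blast
  ultimately obtain q where q: "q \<in> O_span f" "q \<in> U" by blast
  have "\<psi> q = 0"
    using \<psi>_sigma subsetD[OF O_span_subset_X[OF f] q(1)]
      O_span_measurable[OF measurable_sigma_of[OF X_measurable[OF f]] q(1)] by blast
  with q(2) show False by (simp add: U_def)
qed

lemma sigma_of_measurable_iff_weak_closure:
  assumes f: "f \<in> X" and g: "g \<in> X"
  shows "g \<in> borel_measurable (sigma_of M f) \<longleftrightarrow> g \<in> weak_top M X closure_of O_span f"
proof -
  interpret weak: dominated_limit_class M X f "weak_top M X closure_of O_span f"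
    by (rule dominated_limit_class_weak_closure[OF f])
  show ?thesis
    using weak.sigma_of_measurable_in_W[OF g] weak_closure_subset_sigma_of_measurable[OF f] by blast
qed

end

theorem theorem3p1:
  fixes M :: "'a measure" and X :: "('a \<Rightarrow> real) set" and f g :: "'a \<Rightarrow> real"
  assumes "prob_space M"
    and "L0_ideal M X"
    and "\<forall>c::real. (\<lambda>_. c) \<in> X"
    and "\<exists>\<phi>. \<phi> \<in> order_dual_n M X \<and> strictly_positive M X \<phi>"
    and "f \<in> X" and "AE \<omega> in M. 0 \<le> f \<omega>"
    and "g \<in> X"
  shows "(g \<in> borel_measurable (sigma_of M f) \<longleftrightarrow> g \<in> weak_top M X closure_of O_span f)
    \<and> (g \<in> weak_top M X closure_of O_span f \<longleftrightarrow>
         (\<exists>gs. (\<forall>n. gs n \<in> O_span f) \<and> (AE \<omega> in M. (\<lambda>n. gs n \<omega>) \<longlonglongrightarrow> g \<omega>)))"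
proof -
  obtain \<phi> where \<phi>: "\<phi> \<in> order_dual_n M X" "strictly_positive M X \<phi>" using assms(4) by blast
  interpret L0_ideal_functional M X \<phi>
    by (intro L0_ideal_functional.intro L0_ideal_space.intro L0_ideal_space_axioms.intro
        L0_ideal_functional_axioms.intro assms(1,2) \<phi>) (use assms(3) in blast)
  show ?thesis
    using sigma_of_measurable_iff_weak_closure[OF assms(5,7)]
      sigma_of_measurable_iff_AE_LIMSEQ_O_span[OF assms(5,7)] by blast
qed

end
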